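(* Let $(X,\kappa)$ be a finite digital image and $f:X\to X$ a continuous self-map with $L(f)\neq 0$. Then every continuous map $g:X\to X$ with $g\simeq^* f$ has a fixed point or at least two approximate fixed points.
   Context: A digital image is a pair $(X,\kappa)$ where $X$ is a set and $\kappa$ is a symmetric irreflexive relation on $X$ (the adjacency). Write $x\leftrightarrow y$ if adjacent, $x\Leftrightarrow y$ if adjacent or equal. A map $f$ is continuous if $x\leftrightarrow y$ implies $f(x)\Leftrightarrow f(y)$. A point $x$ is an approximate fixed point of $f:X\to X$ if $f(x)\Leftrightarrow x$. The digital interval $[0,m]_{\mathbb Z}$ has consecutive integers adjacent. Continuous $f,g:X\to Y$ are strongly homotopic ($f\simeq^* g$) if there exist $m\ge1$ and $H:X\times[0,m]_{\mathbb Z}\to Y$ with $H(\cdot,0)=f$, $H(\cdot,m)=g$, such that whenever $(x,t)\neq(x',t')$, $x\Leftrightarrow x'$ and $|t-t'|\le1$, we have $H(x,t)\Leftrightarrow H(x',t')$. Simplicial homology: a $q$-simplex of $X$ is a set of $q+1$ pairwise adjacent points. $C_q(X)$ is the free abelian group generated by ordered $q$-simplices $\langle x_0,\dots,x_q\rangle$ modulo $\langle x_{\rho(0)},\dots,x_{\rho(q)}\rangle=\operatorname{sgn}(\rho)\langle x_0,\dots,x_q\rangle$, with boundary $\partial\langle x_0,\dots,x_q\rangle=\sum_{i=0}^q(-1)^i\langle x_0,\dots,\widehat{x_i},\dots,x_q\rangle$; $H_q(X)$ is its homology. For continuous $f$, $f_q\langle p_0,\dots,p_q\rangle=\langle f(p_0),\dots,f(p_q)\rangle$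 (interpreted as $0$ if the image has fewer than $q+1$ points); this is a chain map inducing $f_{*,q}$ on $H_q$. The simplicial Lefschetz number of a self-map $f$ of a finite image is $L(f)=\sum_{q\ge0}(-1)^q\operatorname{tr}(f_{*,q})$, traces taken on $H_q(X)\otimes\mathbb Q$. *)

theory Defs
  imports "HOL-Combinatorics.Permutations" Complex_Main
begin

definition digital_image :: "'a set \<Rightarrow> ('a \<Rightarrow> 'a \<Rightarrow> bool) \<Rightarrow> bool" where
  "digital_image X adj \<longleftrightarrow> (\<forall>x y. adj x y \<longrightarrow> adj y x) \<and> (\<forall>x. \<not> adj x x)"

definition adj_eq :: "('a \<Rightarrow> 'a \<Rightarrow> bool) \<Rightarrow> 'a \<Rightarrow> 'a \<Rightarrow> bool" where
  "adj_eq adj x y \<longleftrightarrow> adj x y \<or> x = y"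

definition dcontinuous :: "'a set \<Rightarrow> ('a \<Rightarrow> 'a \<Rightarrow> bool) \<Rightarrow> ('a \<Rightarrow> 'a) \<Rightarrow> bool" where
  "dcontinuous X adj f \<longleftrightarrow> (\<forall>x\<in>X. f x \<in> X) \<and>
     (\<forall>x\<in>X. \<forall>y\<in>X. adj x y \<longrightarrow> adj_eq adj (f x) (f y))"

definition approx_fixed_point :: "('a \<Rightarrow> 'a \<Rightarrow> bool) \<Rightarrow> ('a \<Rightarrow> 'a) \<Rightarrow> 'a \<Rightarrow> bool" where
  "approx_fixed_point adj f x \<longleftrightarrow> adj_eq adj (f x) x"

definition strongly_homotopic ::
  "'a set \<Rightarrow> ('a \<Rightarrow> 'a \<Rightarrow> bool) \<Rightarrow> ('a \<Rightarrow> 'a) \<Rightarrow> ('a \<Rightarrow> 'a) \<Rightarrow> bool" where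
  "strongly_homotopic X adj f g \<longleftrightarrow>
     (\<exists>(m::nat) (H :: 'a \<Rightarrow> nat \<Rightarrow> 'a). m \<ge> 1 \<and>
        (\<forall>x\<in>X. \<forall>t\<le>m. H x t \<in> X) \<and>
        (\<forall>x\<in>X. H x 0 = f x) \<and> (\<forall>x\<in>X. H x m = g x) \<and>
        (\<forall>x\<in>X. \<forall>x'\<in>X. \<forall>t\<le>m. \<forall>t'\<le>m.
            (x, t) \<noteq> (x', t') \<and> adj_eq adj x x' \<and> t \<le> t' + 1 \<and> t' \<le> t + 1
            \<longrightarrow> adj_eq adj (H x t) (H x' t')))"

text \<open>A q-chain (tensored with Q) is represented as an alternating rational-valued function on
ordered q-simplices: the value at (x0,...,xq) is the coefficient of the oriented generator
<x0,...,xq>; alternation encodes the relation <x_rho(0),...> = sgn(rho) <x0,...>.\<close>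

definition ordered_simplex :: "'a set \<Rightarrow> ('a \<Rightarrow> 'a \<Rightarrow> bool) \<Rightarrow> 'a list \<Rightarrow> bool" where
  "ordered_simplex X adj xs \<longleftrightarrow> xs \<noteq> [] \<and> distinct xs \<and> set xs \<subseteq> X \<and>
     (\<forall>x\<in>set xs. \<forall>y\<in>set xs. x \<noteq> y \<longrightarrow> adj x y)"

definition chains :: "'a set \<Rightarrow> ('a \<Rightarrow> 'a \<Rightarrow> bool) \<Rightarrow> nat \<Rightarrow> ('a list \<Rightarrow> rat) set" where
  "chains X adj q = {c. (\<forall>xs. c xs \<noteq> 0 \<longrightarrow> ordered_simplex X adj xs \<and> length xs = Suc q) \<and>
      (\<forall>xs p. p permutes {..<length xs} \<longrightarrow>
          c (permute_list p xs) = of_int (sign p) * c xs)}"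

text \<open>Boundary: linear extension of the alternating-sum formula; at an ordered simplex
(y1,...,yq) its coefficient is the sum over v of c(v,y1,...,yq).\<close>

definition boundary :: "'a set \<Rightarrow> ('a \<Rightarrow> 'a \<Rightarrow> bool) \<Rightarrow> ('a list \<Rightarrow> rat) \<Rightarrow> 'a list \<Rightarrow> rat" where
  "boundary X adj c ys = (if ordered_simplex X adj ys then (\<Sum>v\<in>X. c (v # ys)) else 0)"

text \<open>Induced chain map: linear extension of <p0,...,pq> \<mapsto> <f p0,...,f pq>
(zero when the image has fewer than q+1 points).\<close>

definition chain_map :: "'a set \<Rightarrow> ('a \<Rightarrow> 'a \<Rightarrow> bool) \<Rightarrow> ('a \<Rightarrow> 'a) \<Rightarrow> ('a list \<Rightarrow> rat) \<Rightarrow> 'a list \<Rightarrow> rat" where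
  "chain_map X adj f c ys = (if ordered_simplex X adj ys
      then (\<Sum>xs\<in>{xs. set xs \<subseteq> X \<and> map f xs = ys}. c xs) else 0)"

definition cycles :: "'a set \<Rightarrow> ('a \<Rightarrow> 'a \<Rightarrow> bool) \<Rightarrow> nat \<Rightarrow> ('a list \<Rightarrow> rat) set" where
  "cycles X adj q = {c \<in> chains X adj q. boundary X adj c = (\<lambda>_. 0)}"

definition boundaries :: "'a set \<Rightarrow> ('a \<Rightarrow> 'a \<Rightarrow> bool) \<Rightarrow> nat \<Rightarrow> ('a list \<Rightarrow> rat) set" where
  "boundaries X adj q = boundary X adj ` chains X adj (Suc q)"

definition lincomb :: "rat list \<Rightarrow> ('b \<Rightarrow> rat) list \<Rightarrow> 'b \<Rightarrow> rat" where
  "lincomb a cs = (\<lambda>y. \<Sum>i<length cs. a ! i * (cs ! i) y)"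

definition quot_coeffs :: "('b \<Rightarrow> rat) set \<Rightarrow> ('b \<Rightarrow> rat) list \<Rightarrow> ('b \<Rightarrow> rat) \<Rightarrow> rat list \<Rightarrow> bool" where
  "quot_coeffs B cs z a \<longleftrightarrow> length a = length cs \<and> (\<lambda>y. z y - lincomb a cs y) \<in> B"

definition quot_basis :: "('b \<Rightarrow> rat) set \<Rightarrow> ('b \<Rightarrow> rat) set \<Rightarrow> ('b \<Rightarrow> rat) list \<Rightarrow> bool" where
  "quot_basis Z B cs \<longleftrightarrow> set cs \<subseteq> Z \<and> (\<forall>z\<in>Z. \<exists>!a. quot_coeffs B cs z a)"

definition quot_trace ::
  "('b \<Rightarrow> rat) set \<Rightarrow> ('b \<Rightarrow> rat) set \<Rightarrow> (('b \<Rightarrow> rat) \<Rightarrow> ('b \<Rightarrow> rat)) \<Rightarrow> rat" where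
  "quot_trace Z B T = (let cs = (SOME cs. quot_basis Z B cs) in
      \<Sum>i<length cs. (THE a. quot_coeffs B cs (T (cs ! i)) a) ! i)"

text \<open>Simplicial Lefschetz number. Homology vanishes in degrees q \<ge> card X (no simplex has
more than card X points), so the sum over q \<ge> 0 is the finite sum over q \<le> card X.\<close>

definition lefschetz :: "'a set \<Rightarrow> ('a \<Rightarrow> 'a \<Rightarrow> bool) \<Rightarrow> ('a \<Rightarrow> 'a) \<Rightarrow> rat" where
  "lefschetz X adj f = (\<Sum>q\<le>card X. (-1) ^ q *
      quot_trace (cycles X adj q) (boundaries X adj q) (chain_map X adj f))"

end

theory Submission
  imports Defs "HOL-Library.Function_Algebras"
begin

text \<open>If \<open>g\<close> had an approximate fixed point \<open>x\<close> with \<open>g x \<noteq> x\<close>, continuity would make \<open>g x\<close>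
a second one. So if the conclusion fails, \<open>g\<close> has no approximate fixed point at all; then no
simplex \<open>\<sigma>\<close> satisfies \<open>g(\<sigma>) = \<sigma>\<close>, every chain map \<open>g\<^sub>q\<close> has zero diagonal in the basis of oriented
simplices, and the Hopf trace formula gives \<open>L(g) = 0\<close>. On the other hand \<open>L\<close> is invariant under
strong homotopy: moving a map at a single point \<open>p\<close> along the homotopy changes its action on a
cycle \<open>z\<close> by the boundary of an explicit double cone over the link of \<open>p\<close> in \<open>z\<close>. Hence
\<open>L(f) = L(g) = 0\<close>, contradicting \<open>L(f) \<noteq> 0\<close>.\<close>

section \<open>Linear algebra of rational-valued functions\<close>

definition fun_subspace :: "('b \<Rightarrow> rat) set \<Rightarrow> bool" where
  "fun_subspace W \<longleftrightarrow> (\<lambda>_. 0) \<in> W \<and> (\<forall>x\<in>W. \<forall>y\<in>W. (\<lambda>t. x t + y t) \<in> W) \<and>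
      (\<forall>r. \<forall>x\<in>W. (\<lambda>t. r * x t) \<in> W)"

lemma fun_subspace_zero: "fun_subspace W \<Longrightarrow> (\<lambda>_. 0) \<in> W"
  by (simp add: fun_subspace_def)

lemma fun_subspace_add: "fun_subspace W \<Longrightarrow> x \<in> W \<Longrightarrow> y \<in> W \<Longrightarrow> (\<lambda>t. x t + y t) \<in> W"
  by (simp add: fun_subspace_def)

lemma fun_subspace_scale: "fun_subspace W \<Longrightarrow> x \<in> W \<Longrightarrow> (\<lambda>t. r * x t) \<in> W"
  by (simp add: fun_subspace_def)

lemma fun_subspace_diff:
  assumes "fun_subspace W" "x \<in> W" "y \<in> W"
  shows "(\<lambda>t. x t - y t) \<in> W"
proof -
  have "(\<lambda>t. x t + (\<lambda>t. (-1) * y t) t) \<in> W"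
    by (intro fun_subspace_add fun_subspace_scale assms)
  thus ?thesis by simp
qed

lemma fun_subspace_sum:
  assumes "fun_subspace W" "finite I" "\<And>i. i \<in> I \<Longrightarrow> x i \<in> W"
  shows "(\<lambda>t. \<Sum>i\<in>I. c i * x i t) \<in> W"
  using assms(2,3)
proof (induction I rule: finite_induct)
  case empty thus ?case using fun_subspace_zero[OF assms(1)] by simp
next
  case (insert a F)
  have "(\<lambda>t. (\<lambda>t. c a * x a t) t + (\<lambda>t. \<Sum>i\<in>F. c i * x i t) t) \<in> W"
    by (intro fun_subspace_add fun_subspace_scale assms(1)) (use insert in auto)
  thus ?case using insert by simp
qed

definition zero_space :: "('b \<Rightarrow> rat) set" where "zero_space = {\<lambda>_. 0}"

lemma fun_subspace_zero_space: "fun_subspace zero_space"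
  by (simp add: fun_subspace_def zero_space_def)

definition cong_mod :: "('b \<Rightarrow> rat) set \<Rightarrow> ('b \<Rightarrow> rat) \<Rightarrow> ('b \<Rightarrow> rat) \<Rightarrow> bool" where
  "cong_mod B x y \<longleftrightarrow> (\<lambda>t. x t - y t) \<in> B"

lemma cong_mod_refl: "fun_subspace B \<Longrightarrow> cong_mod B x x"
  by (simp add: cong_mod_def fun_subspace_zero)

lemma cong_mod_sym:
  assumes "fun_subspace B" "cong_mod B x y"
  shows "cong_mod B y x"
proof -
  have "(\<lambda>t. (-1) * (\<lambda>t. x t - y t) t) \<in> B"
    using assms by (intro fun_subspace_scale) (auto simp: cong_mod_def)
  thus ?thesis by (simp add: cong_mod_def)
qed

lemma cong_mod_trans:
  assumes "fun_subspace B" "cong_mod B x y" "cong_mod B y z"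
  shows "cong_mod B x z"
proof -
  have "(\<lambda>t. (\<lambda>t. x t - y t) t + (\<lambda>t. y t - z t) t) \<in> B"
    using assms by (intro fun_subspace_add) (auto simp: cong_mod_def)
  thus ?thesis by (simp add: cong_mod_def)
qed

lemma cong_mod_sum:
  assumes "fun_subspace B" "finite I" "\<And>i. i \<in> I \<Longrightarrow> cong_mod B (x i) (y i)"
  shows "cong_mod B (\<lambda>t. \<Sum>i\<in>I. c i * x i t) (\<lambda>t. \<Sum>i\<in>I. c i * y i t)"
proof -
  have "(\<lambda>t. \<Sum>i\<in>I. c i * (\<lambda>t. x i t - y i t) t) \<in> B"
    using assms by (intro fun_subspace_sum) (auto simp: cong_mod_def)
  thus ?thesis by (simp add: cong_mod_def sum_subtractf right_diff_distrib)
qed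

lemma cong_mod_zero_space: "cong_mod zero_space x y \<longleftrightarrow> x = y"
  by (auto simp: cong_mod_def zero_space_def fun_eq_iff)

definition fun_linear :: "(('b \<Rightarrow> rat) \<Rightarrow> ('c \<Rightarrow> rat)) \<Rightarrow> bool" where
  "fun_linear T \<longleftrightarrow> (\<forall>x y. T (\<lambda>t. x t + y t) = (\<lambda>t. T x t + T y t)) \<and>
     (\<forall>r x. T (\<lambda>t. r * x t) = (\<lambda>t. r * T x t))"

lemma fun_linear_add: "fun_linear T \<Longrightarrow> T (\<lambda>t. x t + y t) = (\<lambda>t. T x t + T y t)"
  by (simp add: fun_linear_def)

lemma fun_linear_scale: "fun_linear T \<Longrightarrow> T (\<lambda>t. r * x t) = (\<lambda>t. r * T x t)"
  by (simp add: fun_linear_def)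

lemma fun_linear_zero: "fun_linear T \<Longrightarrow> T (\<lambda>_. 0) = (\<lambda>_. 0)"
  using fun_linear_scale[of T 0 "\<lambda>_. 0"] by simp

lemma fun_linear_sum:
  assumes "fun_linear T" "finite I"
  shows "T (\<lambda>t. \<Sum>i\<in>I. c i * x i t) = (\<lambda>t. \<Sum>i\<in>I. c i * T (x i) t)"
  using assms(2)
proof (induction I rule: finite_induct)
  case empty thus ?case using fun_linear_zero[OF assms(1)] by simp
next
  case (insert a F)
  have "T (\<lambda>t. \<Sum>i\<in>insert a F. c i * x i t) = T (\<lambda>t. c a * x a t + (\<Sum>i\<in>F. c i * x i t))"
    using insert by simp
  also have "\<dots> = (\<lambda>t. T (\<lambda>t. c a * x a t) t + T (\<lambda>t. \<Sum>i\<in>F. c i * x i t) t)"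
    by (rule fun_linear_add[OF assms(1)])
  also have "\<dots> = (\<lambda>t. c a * T (x a) t + (\<Sum>i\<in>F. c i * T (x i) t))"
    using fun_linear_scale[OF assms(1)] insert by simp
  finally show ?case using insert by simp
qed

lemma fun_linear_diff:
  assumes "fun_linear T"
  shows "T (\<lambda>t. x t - y t) = (\<lambda>t. T x t - T y t)"
proof -
  have "T (\<lambda>t. x t - y t) = T (\<lambda>t. x t + (-1) * y t)" by simp
  also have "\<dots> = (\<lambda>t. T x t + T (\<lambda>t. (-1) * y t) t)" by (rule fun_linear_add[OF assms])
  also have "\<dots> = (\<lambda>t. T x t - T y t)" using fun_linear_scale[OF assms, of "-1" y] by simp
  finally show ?thesis .
qed

lemma fun_linear_cong_mod:
  assumes "fun_linear T" "T ` B \<subseteq> B'" "cong_mod B x y"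
  shows "cong_mod B' (T x) (T y)"
proof -
  have "T (\<lambda>t. x t - y t) \<in> B'" using assms(2,3) by (auto simp: cong_mod_def)
  thus ?thesis unfolding cong_mod_def fun_linear_diff[OF assms(1)] .
qed

lemma fun_subspace_kernel:
  assumes "fun_subspace C" "fun_linear D"
  shows "fun_subspace {c \<in> C. D c = (\<lambda>_. 0)}"
  using assms unfolding fun_subspace_def by (auto simp: fun_linear_add fun_linear_scale fun_linear_zero)

lemma fun_subspace_image:
  assumes "fun_subspace C" "fun_linear D"
  shows "fun_subspace (D ` C)"
  unfolding fun_subspace_def
proof (intro conjI ballI allI)
  show "(\<lambda>_. 0) \<in> D ` C"
    using fun_linear_zero[OF assms(2)] fun_subspace_zero[OF assms(1)] by (metis image_eqI)
next
  fix x y assume "x \<in> D ` C" "y \<in> D ` C"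
  then obtain a b where "a \<in> C" "b \<in> C" "x = D a" "y = D b" by blast
  thus "(\<lambda>t. x t + y t) \<in> D ` C"
    using fun_linear_add[OF assms(2), of a b, symmetric] fun_subspace_add[OF assms(1)] by (metis image_eqI)
next
  fix r x assume "x \<in> D ` C"
  then obtain a where "a \<in> C" "x = D a" by blast
  thus "(\<lambda>t. r * x t) \<in> D ` C"
    using fun_linear_scale[OF assms(2), of r a, symmetric] fun_subspace_scale[OF assms(1)] by (metis image_eqI)
qed

section \<open>Traces on quotient spaces\<close>

lemma lincomb_map: "lincomb (map f [0..<length cs]) cs = (\<lambda>y. \<Sum>i<length cs. f i * (cs ! i) y)"
  unfolding lincomb_def by (intro ext sum.cong) auto

lemma lincomb_diff:
  "(\<lambda>t. lincomb a cs t - lincomb a' cs t) = lincomb (map (\<lambda>i. a ! i - a' ! i) [0..<length cs]) cs"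
  unfolding lincomb_map by (simp add: lincomb_def sum_subtractf[symmetric] left_diff_distrib)

lemma sum_lessThan_add: "(\<Sum>i<(n::nat)+m. f i) = (\<Sum>i<n. f i) + (\<Sum>j<m. f (n+j) :: rat)"
  by (induction m) (auto simp: add.assoc)

lemma lincomb_append:
  assumes "length a = length cs" "length b = length ds"
  shows "lincomb (a @ b) (cs @ ds) = (\<lambda>t. lincomb a cs t + lincomb b ds t)"
  unfolding lincomb_def using assms by (intro ext) (simp add: sum_lessThan_add nth_append)

lemma lincomb_mem: "fun_subspace W \<Longrightarrow> set cs \<subseteq> W \<Longrightarrow> lincomb a cs \<in> W"
  unfolding lincomb_def by (intro fun_subspace_sum) auto

lemma lincomb_zero: "(\<And>i. i < length cs \<Longrightarrow> a ! i = 0) \<Longrightarrow> lincomb a cs = (\<lambda>_. 0)"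
  unfolding lincomb_def by (intro ext sum.neutral) auto

lemma fun_linear_lincomb: "fun_linear D \<Longrightarrow> D (lincomb a cs) = lincomb a (map D cs)"
  unfolding lincomb_def using fun_linear_sum[of D "{..<length cs}" "\<lambda>i. a ! i" "\<lambda>i. cs ! i"] by simp

definition indep_mod :: "('b \<Rightarrow> rat) set \<Rightarrow> ('b \<Rightarrow> rat) list \<Rightarrow> bool" where
  "indep_mod B cs \<longleftrightarrow> (\<forall>a. length a = length cs \<longrightarrow> lincomb a cs \<in> B \<longrightarrow> (\<forall>i<length cs. a ! i = 0))"

definition spans_mod :: "('b \<Rightarrow> rat) set \<Rightarrow> ('b \<Rightarrow> rat) set \<Rightarrow> ('b \<Rightarrow> rat) list \<Rightarrow> bool" where
  "spans_mod Z B cs \<longleftrightarrow> (\<forall>z\<in>Z. \<exists>a. length a = length cs \<and> cong_mod B z (lincomb a cs))"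

lemma quot_basis_indep_mod:
  assumes sB: "fun_subspace B" and sZ: "fun_subspace Z" and q: "quot_basis Z B cs"
  shows "indep_mod B cs"
  unfolding indep_mod_def
proof (intro allI impI)
  fix a i assume a: "length a = length cs" "lincomb a cs \<in> B" "i < length cs"
  have u: "\<exists>!a. quot_coeffs B cs (\<lambda>_. 0) a"
    using q fun_subspace_zero[OF sZ] unfolding quot_basis_def by blast
  have "quot_coeffs B cs (\<lambda>_. 0) (replicate (length cs) 0)"
    unfolding quot_coeffs_def lincomb_def using fun_subspace_zero[OF sB] by simp
  moreover have "(\<lambda>y. 0 - lincomb (map uminus a) cs y) = lincomb a cs"
    using a(1) unfolding lincomb_def by (auto simp: sum_negf[symmetric])
  hence "quot_coeffs B cs (\<lambda>_. 0) (map uminus a)"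
    unfolding quot_coeffs_def using a by simp
  ultimately have "map uminus a = replicate (length cs) 0" using u by blast
  hence "map uminus a ! i = 0" using a by simp
  thus "a ! i = 0" using a by simp
qed

lemma quot_basisI:
  assumes sB: "fun_subspace B" and Z: "set cs \<subseteq> Z" and ind: "indep_mod B cs"
    and sp: "spans_mod Z B cs"
  shows "quot_basis Z B cs"
  unfolding quot_basis_def
proof (intro conjI Z ballI)
  fix z assume "z \<in> Z"
  then obtain a where a: "length a = length cs" "cong_mod B z (lincomb a cs)"
    using sp unfolding spans_mod_def by blast
  show "\<exists>!a. quot_coeffs B cs z a"
  proof (rule ex1I[of _ a])
    show "quot_coeffs B cs z a" using a unfolding quot_coeffs_def cong_mod_def by simp
  next
    fix a' assume "quot_coeffs B cs z a'"
    hence a': "length a' = length cs" "cong_mod B z (lincomb a' cs)"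
      unfolding quot_coeffs_def cong_mod_def by auto
    have "cong_mod B (lincomb a' cs) (lincomb a cs)"
      using a a' sB by (meson cong_mod_sym cong_mod_trans)
    hence "lincomb (map (\<lambda>i. a' ! i - a ! i) [0..<length cs]) cs \<in> B"
      unfolding cong_mod_def lincomb_diff .
    hence "\<forall>i<length cs. map (\<lambda>i. a' ! i - a ! i) [0..<length cs] ! i = 0"
      using ind unfolding indep_mod_def by simp
    thus "a' = a" using a a' by (intro nth_equalityI) auto
  qed
qed

lemma quot_basis_nth_mem: "quot_basis Z B cs \<Longrightarrow> k < length cs \<Longrightarrow> cs ! k \<in> Z"
  unfolding quot_basis_def by (meson nth_mem subsetD)

definition quot_coord :: "('b \<Rightarrow> rat) set \<Rightarrow> ('b \<Rightarrow> rat) list \<Rightarrow> ('b \<Rightarrow> rat) \<Rightarrow> rat list" where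
  "quot_coord B cs z = (THE a. quot_coeffs B cs z a)"

lemma quot_coord_spec:
  assumes "quot_basis Z B cs" "z \<in> Z"
  shows "length (quot_coord B cs z) = length cs" "cong_mod B z (lincomb (quot_coord B cs z) cs)"
proof -
  have "quot_coeffs B cs z (quot_coord B cs z)"
    unfolding quot_coord_def by (rule theI') (use assms in \<open>auto simp: quot_basis_def\<close>)
  thus "length (quot_coord B cs z) = length cs" "cong_mod B z (lincomb (quot_coord B cs z) cs)"
    unfolding quot_coeffs_def cong_mod_def by auto
qed

lemma quot_coord_unique:
  assumes "quot_basis Z B cs" "z \<in> Z" "length a = length cs" "cong_mod B z (lincomb a cs)"
  shows "quot_coord B cs z = a"
proof -
  have "quot_coeffs B cs z a" using assms unfolding quot_coeffs_def cong_mod_def by auto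
  moreover have "\<exists>!a. quot_coeffs B cs z a" using assms unfolding quot_basis_def by blast
  ultimately show ?thesis unfolding quot_coord_def by (rule the1_equality[rotated])
qed

lemma quot_coord_nth:
  assumes "quot_basis Z B cs" "z \<in> Z" "cong_mod B z (\<lambda>t. \<Sum>i<length cs. f i * (cs ! i) t)"
    "k < length cs"
  shows "quot_coord B cs z ! k = f k"
proof -
  have "quot_coord B cs z = map f [0..<length cs]"
    using assms by (intro quot_coord_unique[OF assms(1,2)]) (auto simp: lincomb_map)
  thus ?thesis using assms by simp
qed

lemma cong_mod_quot_coord_expansion:
  assumes "quot_basis Z B cs" "z \<in> Z"
  shows "cong_mod B z (\<lambda>t. \<Sum>i<length cs. quot_coord B cs z ! i * (cs ! i) t)"
  using quot_coord_spec[OF assms] by (simp add: lincomb_def)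

lemma quot_basis_iff:
  assumes "fun_subspace B" "fun_subspace Z"
  shows "quot_basis Z B cs \<longleftrightarrow> set cs \<subseteq> Z \<and> indep_mod B cs \<and> spans_mod Z B cs"
proof
  assume q: "quot_basis Z B cs"
  have "spans_mod Z B cs" unfolding spans_mod_def using quot_coord_spec[OF q] by blast
  thus "set cs \<subseteq> Z \<and> indep_mod B cs \<and> spans_mod Z B cs"
    using q quot_basis_indep_mod[OF assms q] by (simp add: quot_basis_def)
next
  assume "set cs \<subseteq> Z \<and> indep_mod B cs \<and> spans_mod Z B cs"
  thus "quot_basis Z B cs" using quot_basisI[OF assms(1)] by blast
qed

lemma quot_coord_nth_self:
  assumes sB: "fun_subspace B" and cs: "quot_basis Z B cs" and k: "k < length cs"
    and i: "i < length cs"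
  shows "quot_coord B cs (cs ! k) ! i = (if i = k then 1 else 0)"
proof (rule quot_coord_nth[OF cs quot_basis_nth_mem[OF cs k] _ i])
  have "(\<Sum>i<length cs. (if i = k then 1 else 0) * (cs ! i) t) = (cs ! k) t" for t
  proof -
    have "(\<Sum>i<length cs. (if i = k then 1 else 0) * (cs ! i) t)
        = (\<Sum>i<length cs. if i = k then (cs ! i) t else 0)"
      by (rule sum.cong) auto
    thus ?thesis using k by simp
  qed
  thus "cong_mod B (cs ! k) (\<lambda>t. \<Sum>i<length cs. (if i = k then 1 else 0) * (cs ! i) t)"
    using cong_mod_refl[OF sB] by simp
qed

definition basis_trace ::
  "('b \<Rightarrow> rat) set \<Rightarrow> ('b \<Rightarrow> rat) list \<Rightarrow> (('b \<Rightarrow> rat) \<Rightarrow> ('b \<Rightarrow> rat)) \<Rightarrow> rat" where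
  "basis_trace B cs T = (\<Sum>i<length cs. quot_coord B cs (T (cs ! i)) ! i)"

lemma quot_trace_some_basis: "quot_trace Z B T = basis_trace B (SOME cs. quot_basis Z B cs) T"
  unfolding quot_trace_def basis_trace_def quot_coord_def Let_def by simp

lemma sum_swap3:
  "(\<Sum>k\<in>K. \<Sum>i\<in>I. \<Sum>l\<in>L. f k i l) = (\<Sum>l\<in>L. \<Sum>k\<in>K. \<Sum>i\<in>I. (f k i l :: rat))"
proof -
  have "(\<Sum>k\<in>K. \<Sum>i\<in>I. \<Sum>l\<in>L. f k i l) = (\<Sum>k\<in>K. \<Sum>l\<in>L. \<Sum>i\<in>I. f k i l)"
    by (rule sum.cong[OF refl]) (rule sum.swap)
  also have "\<dots> = (\<Sum>l\<in>L. \<Sum>k\<in>K. \<Sum>i\<in>I. f k i l)" by (rule sum.swap)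
  finally show ?thesis .
qed

context
  fixes B Z :: "('b \<Rightarrow> rat) set" and cs ds :: "('b \<Rightarrow> rat) list"
  assumes sB: "fun_subspace B" and cs: "quot_basis Z B cs" and ds: "quot_basis Z B ds"
begin

lemma quot_coord_change_inverse:
  assumes i: "i < length cs" and k: "k < length cs"
  shows "(\<Sum>l<length ds. quot_coord B cs (ds ! l) ! i * quot_coord B ds (cs ! k) ! l)
    = (if i = k then 1 else 0)"
proof -
  let ?P = "\<lambda>i l. quot_coord B cs (ds ! l) ! i" and ?Q = "\<lambda>l k. quot_coord B ds (cs ! k) ! l"
  note cong_mod_trans[OF sB, trans]
  have "cong_mod B (cs ! k) (\<lambda>t. \<Sum>l<length ds. ?Q l k * (ds ! l) t)"
    using cong_mod_quot_coord_expansion[OF ds quot_basis_nth_mem[OF cs k]] .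
  also have "cong_mod B \<dots> (\<lambda>t. \<Sum>l<length ds. ?Q l k * (\<lambda>t. \<Sum>i<length cs. ?P i l * (cs ! i) t) t)"
    using cong_mod_quot_coord_expansion[OF cs quot_basis_nth_mem[OF ds]]
    by (intro cong_mod_sum sB) auto
  also have "(\<lambda>t. \<Sum>l<length ds. ?Q l k * (\<lambda>t. \<Sum>i<length cs. ?P i l * (cs ! i) t) t)
      = (\<lambda>t. \<Sum>i<length cs. (\<Sum>l<length ds. ?P i l * ?Q l k) * (cs ! i) t)"
    by (auto simp: sum_distrib_left sum_distrib_right mult_ac intro!: ext sum.swap)
  finally have "quot_coord B cs (cs ! k) ! i = (\<Sum>l<length ds. ?P i l * ?Q l k)"
    using quot_coord_nth[OF cs quot_basis_nth_mem[OF cs k] _ i] by simp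
  thus ?thesis using quot_coord_nth_self[OF sB cs k i] by simp
qed

lemma quot_coord_change_image:
  assumes lT: "fun_linear T" and TZ: "T ` Z \<subseteq> Z" and TB: "T ` B \<subseteq> B"
    and j: "j < length ds" and l: "l < length ds"
  shows "quot_coord B ds (T (ds ! j)) ! l = (\<Sum>k<length cs. \<Sum>i<length cs.
    quot_coord B ds (cs ! i) ! l * quot_coord B cs (T (cs ! k)) ! i * quot_coord B cs (ds ! j) ! k)"
proof -
  let ?n = "length cs" and ?m = "length ds"
  let ?P = "\<lambda>k j. quot_coord B cs (ds ! j) ! k" and ?Q = "\<lambda>l i. quot_coord B ds (cs ! i) ! l"
    and ?A = "\<lambda>i k. quot_coord B cs (T (cs ! k)) ! i"
  have csZ: "cs ! k \<in> Z" if "k < ?n" for k using quot_basis_nth_mem[OF cs that] .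
  note cong_mod_trans[OF sB, trans]
  have "cong_mod B (T (ds ! j)) (T (\<lambda>t. \<Sum>k<?n. ?P k j * (cs ! k) t))"
    using fun_linear_cong_mod[OF lT TB cong_mod_quot_coord_expansion[OF cs quot_basis_nth_mem[OF ds j]]] .
  also have "T (\<lambda>t. \<Sum>k<?n. ?P k j * (cs ! k) t) = (\<lambda>t. \<Sum>k<?n. ?P k j * T (cs ! k) t)"
    by (rule fun_linear_sum[OF lT]) simp
  also have "cong_mod B \<dots> (\<lambda>t. \<Sum>k<?n. ?P k j * (\<lambda>t. \<Sum>i<?n. ?A i k * (\<lambda>t. \<Sum>l<?m. ?Q l i * (ds ! l) t) t) t)"
  proof (intro cong_mod_sum sB, simp)
    fix k assume k: "k \<in> {..<?n}"
    have "cong_mod B (T (cs ! k)) (\<lambda>t. \<Sum>i<?n. ?A i k * (cs ! i) t)"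
      using cong_mod_quot_coord_expansion[OF cs, of "T (cs ! k)"] TZ csZ k by blast
    also have "cong_mod B \<dots> (\<lambda>t. \<Sum>i<?n. ?A i k * (\<lambda>t. \<Sum>l<?m. ?Q l i * (ds ! l) t) t)"
      using cong_mod_quot_coord_expansion[OF ds csZ] by (intro cong_mod_sum sB) auto
    finally show "cong_mod B (T (cs ! k)) (\<lambda>t. \<Sum>i<?n. ?A i k * (\<lambda>t. \<Sum>l<?m. ?Q l i * (ds ! l) t) t)" .
  qed
  also have "(\<lambda>t. \<Sum>k<?n. ?P k j * (\<lambda>t. \<Sum>i<?n. ?A i k * (\<lambda>t. \<Sum>l<?m. ?Q l i * (ds ! l) t) t) t)
      = (\<lambda>t. \<Sum>l<?m. (\<Sum>k<?n. \<Sum>i<?n. ?Q l i * ?A i k * ?P k j) * (ds ! l) t)"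
  proof
    fix t
    have "(\<Sum>k<?n. ?P k j * (\<Sum>i<?n. ?A i k * (\<Sum>l<?m. ?Q l i * (ds ! l) t)))
        = (\<Sum>k<?n. \<Sum>i<?n. \<Sum>l<?m. ?Q l i * ?A i k * ?P k j * (ds ! l) t)"
      by (simp add: sum_distrib_left mult_ac)
    also have "\<dots> = (\<Sum>l<?m. \<Sum>k<?n. \<Sum>i<?n. ?Q l i * ?A i k * ?P k j * (ds ! l) t)"
      by (rule sum_swap3)
    also have "\<dots> = (\<Sum>l<?m. (\<Sum>k<?n. \<Sum>i<?n. ?Q l i * ?A i k * ?P k j) * (ds ! l) t)"
      by (simp add: sum_distrib_right)
    finally show "(\<Sum>k<?n. ?P k j * (\<Sum>i<?n. ?A i k * (\<Sum>l<?m. ?Q l i * (ds ! l) t)))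
        = (\<Sum>l<?m. (\<Sum>k<?n. \<Sum>i<?n. ?Q l i * ?A i k * ?P k j) * (ds ! l) t)" .
  qed
  finally have expansion: "cong_mod B (T (ds ! j))
      (\<lambda>t. \<Sum>l<?m. (\<Sum>k<?n. \<Sum>i<?n. ?Q l i * ?A i k * ?P k j) * (ds ! l) t)" .
  have "T (ds ! j) \<in> Z" using TZ quot_basis_nth_mem[OF ds j] by blast
  from quot_coord_nth[OF ds this expansion l] show ?thesis by simp
qed

lemma basis_trace_independent:
  assumes "fun_linear T" "T ` Z \<subseteq> Z" "T ` B \<subseteq> B"
  shows "basis_trace B cs T = basis_trace B ds T"
proof -
  let ?n = "length cs" and ?m = "length ds"
  let ?P = "\<lambda>k j. quot_coord B cs (ds ! j) ! k" and ?Q = "\<lambda>l i. quot_coord B ds (cs ! i) ! l"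
    and ?A = "\<lambda>i k. quot_coord B cs (T (cs ! k)) ! i"
  have "basis_trace B ds T = (\<Sum>j<?m. \<Sum>k<?n. \<Sum>i<?n. ?Q j i * ?A i k * ?P k j)"
    unfolding basis_trace_def by (intro sum.cong) (auto simp: quot_coord_change_image[OF assms])
  also have "\<dots> = (\<Sum>k<?n. \<Sum>i<?n. \<Sum>j<?m. ?Q j i * ?A i k * ?P k j)"
    by (rule sum_swap3[symmetric])
  also have "\<dots> = (\<Sum>k<?n. \<Sum>i<?n. ?A i k * (\<Sum>j<?m. ?P k j * ?Q j i))"
    by (simp add: sum_distrib_left mult_ac)
  also have "\<dots> = (\<Sum>k<?n. \<Sum>i<?n. ?A i k * (if k = i then 1 else 0))"
    by (intro sum.cong refl) (simp add: quot_coord_change_inverse)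
  also have "\<dots> = basis_trace B cs T"
    by (simp add: basis_trace_def if_distrib cong: if_cong)
  finally show ?thesis by simp
qed

end

lemma quot_trace_eq_basis_trace:
  assumes "fun_subspace B" "fun_linear T" "T ` Z \<subseteq> Z" "T ` B \<subseteq> B" "quot_basis Z B cs"
  shows "quot_trace Z B T = basis_trace B cs T"
proof -
  have "quot_basis Z B (SOME cs. quot_basis Z B cs)" using assms(5) by (rule someI)
  thus ?thesis unfolding quot_trace_some_basis
    using basis_trace_independent[OF assms(1)] assms by blast
qed

context
  fixes B Z V :: "('b \<Rightarrow> rat) set" and cs ds :: "('b \<Rightarrow> rat) list"
  assumes sB: "fun_subspace B" and sZ: "fun_subspace Z" and sV: "fun_subspace V"
    and BZ: "B \<subseteq> Z" and ZV: "Z \<subseteq> V"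
    and cs: "quot_basis Z B cs" and ds: "quot_basis V Z ds"
begin

lemma spans_mod_append: "spans_mod V B (cs @ ds)"
  unfolding spans_mod_def
proof
  fix v assume v: "v \<in> V"
  obtain b where b: "length b = length ds" "cong_mod Z v (lincomb b ds)"
    using ds v unfolding quot_basis_iff[OF sZ sV] spans_mod_def by blast
  have "(\<lambda>t. v t - lincomb b ds t) \<in> Z" using b(2) unfolding cong_mod_def .
  moreover have "spans_mod Z B cs" using cs quot_basis_iff[OF sB sZ] by blast
  ultimately obtain a where a: "length a = length cs" "cong_mod B (\<lambda>t. v t - lincomb b ds t) (lincomb a cs)"
    unfolding spans_mod_def by blast
  hence "cong_mod B v (lincomb (a @ b) (cs @ ds))"
    unfolding lincomb_append[OF a(1) b(1)] cong_mod_def by (simp add: algebra_simps)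
  thus "\<exists>g. length g = length (cs @ ds) \<and> cong_mod B v (lincomb g (cs @ ds))"
    using a b by (intro exI[of _ "a @ b"]) simp
qed

lemma indep_mod_append: "indep_mod B (cs @ ds)"
  unfolding indep_mod_def
proof (intro allI impI)
  fix g i assume g: "length g = length (cs @ ds)" "lincomb g (cs @ ds) \<in> B" "i < length (cs @ ds)"
  define a where "a = take (length cs) g"
  define b where "b = drop (length cs) g"
  have la: "length a = length cs" and lb: "length b = length ds" using g(1) by (auto simp: a_def b_def)
  have gab: "g = a @ b" by (simp add: a_def b_def)
  have sum: "(\<lambda>t. lincomb a cs t + lincomb b ds t) \<in> B"
    using g(2) unfolding gab lincomb_append[OF la lb] .
  have csZ: "set cs \<subseteq> Z" using cs by (simp add: quot_basis_def)
  have "(\<lambda>t. (\<lambda>t. lincomb a cs t + lincomb b ds t) t - lincomb a cs t) \<in> Z"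
    using sum BZ lincomb_mem[OF sZ csZ] by (intro fun_subspace_diff sZ) auto
  hence b0: "\<forall>j<length ds. b ! j = 0"
    using quot_basis_indep_mod[OF sZ sV ds] lb unfolding indep_mod_def by simp
  hence "lincomb a cs \<in> B" using sum lincomb_zero[of ds b] by simp
  hence "\<forall>j<length cs. a ! j = 0"
    using quot_basis_indep_mod[OF sB sZ cs] la unfolding indep_mod_def by blast
  thus "g ! i = 0" using b0 g(3) la unfolding gab by (auto simp: nth_append)
qed

lemma quot_basis_append: "quot_basis V B (cs @ ds)"
proof (rule quot_basisI[OF sB _ indep_mod_append spans_mod_append])
  have "set cs \<subseteq> Z" "set ds \<subseteq> V" using cs ds by (simp_all add: quot_basis_def)
  thus "set (cs @ ds) \<subseteq> V" using ZV by auto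
qed

lemma quot_coord_append:
  assumes v: "v \<in> V"
  shows "quot_coord B (cs @ ds) v = quot_coord B cs (\<lambda>t. v t - lincomb (quot_coord Z ds v) ds t) @ quot_coord Z ds v"
proof -
  define b where "b = quot_coord Z ds v"
  define z where "z = (\<lambda>t. v t - lincomb b ds t)"
  have b: "length b = length ds" "cong_mod Z v (lincomb b ds)" using quot_coord_spec[OF ds v] b_def by auto
  have zZ: "z \<in> Z" using b(2) unfolding z_def cong_mod_def .
  define a where "a = quot_coord B cs z"
  have a: "length a = length cs" "cong_mod B z (lincomb a cs)" using quot_coord_spec[OF cs zZ] a_def by auto
  have "cong_mod B v (lincomb (a @ b) (cs @ ds))"
    using a(2) unfolding lincomb_append[OF a(1) b(1)] cong_mod_def z_def by (simp add: algebra_simps)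
  hence "quot_coord B (cs @ ds) v = a @ b"
    using a b by (intro quot_coord_unique[OF quot_basis_append v]) auto
  thus ?thesis unfolding a_def z_def b_def .
qed

lemma basis_trace_append:
  assumes TV: "T ` V \<subseteq> V" and TZ: "T ` Z \<subseteq> Z"
  shows "basis_trace B (cs @ ds) T = basis_trace B cs T + basis_trace Z ds T"
proof -
  let ?n = "length cs" and ?m = "length ds"
  have 1: "quot_coord B (cs @ ds) (T (cs ! i)) ! i = quot_coord B cs (T (cs ! i)) ! i" if i: "i < ?n" for i
  proof -
    have TZi: "T (cs ! i) \<in> Z" using TZ quot_basis_nth_mem[OF cs i] by blast
    have TVi: "T (cs ! i) \<in> V" using TZi ZV by blast
    have "quot_coord Z ds (T (cs ! i)) = replicate ?m 0"
      by (rule quot_coord_unique[OF ds TVi]) (use TZi in \<open>simp_all add: lincomb_zero cong_mod_def\<close>)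
    hence "quot_coord B (cs @ ds) (T (cs ! i)) = quot_coord B cs (T (cs ! i)) @ replicate ?m 0"
      using quot_coord_append[OF TVi] by (simp add: lincomb_zero)
    thus ?thesis using quot_coord_spec(1)[OF cs TZi] i by (simp add: nth_append)
  qed
  have 2: "quot_coord B (cs @ ds) (T (ds ! j)) ! (?n + j) = quot_coord Z ds (T (ds ! j)) ! j"
    if j: "j < ?m" for j
  proof -
    have TVj: "T (ds ! j) \<in> V" using TV quot_basis_nth_mem[OF ds j] by blast
    define z where "z = (\<lambda>t. T (ds ! j) t - lincomb (quot_coord Z ds (T (ds ! j))) ds t)"
    have zZ: "z \<in> Z" using quot_coord_spec(2)[OF ds TVj] unfolding z_def cong_mod_def .
    have "quot_coord B (cs @ ds) (T (ds ! j)) = quot_coord B cs z @ quot_coord Z ds (T (ds ! j))"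
      using quot_coord_append[OF TVj] unfolding z_def .
    thus ?thesis using quot_coord_spec(1)[OF cs zZ] by (simp add: nth_append)
  qed
  have "basis_trace B (cs @ ds) T = (\<Sum>i<?n. quot_coord B (cs @ ds) (T (cs ! i)) ! i)
      + (\<Sum>j<?m. quot_coord B (cs @ ds) (T (ds ! j)) ! (?n + j))"
    unfolding basis_trace_def by (simp add: sum_lessThan_add nth_append)
  also have "\<dots> = basis_trace B cs T + basis_trace Z ds T"
    unfolding basis_trace_def using 1 2 by simp
  finally show ?thesis .
qed

end

lemma fun_linear_cong_mod_kernel:
  assumes "fun_linear D" "cong_mod {c \<in> C. D c = (\<lambda>_. 0)} c (lincomb b ds)"
  shows "D c = lincomb b (map D ds)"
proof -
  have "(\<lambda>t. D c t - D (lincomb b ds) t) = (\<lambda>_. 0)"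
    using assms(2) by (simp add: cong_mod_def fun_linear_diff[OF assms(1)])
  hence "D c = D (lincomb b ds)" by (simp add: fun_eq_iff)
  thus ?thesis by (simp add: fun_linear_lincomb[OF assms(1)])
qed

context
  fixes C :: "('b \<Rightarrow> rat) set" and D :: "('b \<Rightarrow> rat) \<Rightarrow> ('b \<Rightarrow> rat)" and ds
  assumes sC: "fun_subspace C" and lD: "fun_linear D"
    and ds: "quot_basis C {c \<in> C. D c = (\<lambda>_. 0)} ds"
begin

lemma quot_basis_image: "quot_basis (D ` C) zero_space (map D ds)"
proof -
  let ?K = "{c \<in> C. D c = (\<lambda>_. 0)}"
  have d: "set ds \<subseteq> C" "indep_mod ?K ds" "spans_mod C ?K ds"
    using ds quot_basis_iff[OF fun_subspace_kernel[OF sC lD] sC] by auto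
  have "indep_mod zero_space (map D ds)"
    unfolding indep_mod_def
  proof (intro allI impI)
    fix g i assume g: "length g = length (map D ds)" "lincomb g (map D ds) \<in> zero_space"
      "i < length (map D ds)"
    have "lincomb g ds \<in> ?K"
      using g(2) lincomb_mem[OF sC d(1)] by (simp add: fun_linear_lincomb[OF lD] zero_space_def)
    thus "g ! i = 0" using d(2) g unfolding indep_mod_def by simp
  qed
  moreover have "spans_mod (D ` C) zero_space (map D ds)"
    unfolding spans_mod_def
  proof
    fix b assume "b \<in> D ` C"
    then obtain c where c: "c \<in> C" "b = D c" by blast
    obtain a where a: "length a = length ds" "cong_mod ?K c (lincomb a ds)"
      using d(3) c unfolding spans_mod_def by blast
    have "b = lincomb a (map D ds)" using fun_linear_cong_mod_kernel[OF lD a(2)] c by simp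
    thus "\<exists>a. length a = length (map D ds) \<and> cong_mod zero_space b (lincomb a (map D ds))"
      using a(1) by (auto simp: cong_mod_zero_space)
  qed
  ultimately show ?thesis using d(1) by (intro quot_basisI[OF fun_subspace_zero_space]) auto
qed

lemma basis_trace_image:
  assumes TC: "T ` C \<subseteq> C" and comm: "\<And>c. c \<in> C \<Longrightarrow> T (D c) = D (T c)"
  shows "basis_trace zero_space (map D ds) T = basis_trace {c \<in> C. D c = (\<lambda>_. 0)} ds T"
proof -
  let ?K = "{c \<in> C. D c = (\<lambda>_. 0)}"
  have "quot_coord zero_space (map D ds) (T (map D ds ! j)) = quot_coord ?K ds (T (ds ! j))"
    if j: "j < length ds" for j
  proof -
    have dj: "ds ! j \<in> C" using quot_basis_nth_mem[OF ds j] .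
    hence TC': "T (ds ! j) \<in> C" using TC by blast
    have "T (map D ds ! j) = D (T (ds ! j))" using comm[OF dj] j by simp
    also have "\<dots> = lincomb (quot_coord ?K ds (T (ds ! j))) (map D ds)"
      by (rule fun_linear_cong_mod_kernel[OF lD quot_coord_spec(2)[OF ds TC']])
    finally have "cong_mod zero_space (T (map D ds ! j)) (lincomb (quot_coord ?K ds (T (ds ! j))) (map D ds))"
      by (simp add: cong_mod_zero_space)
    moreover have "T (map D ds ! j) \<in> D ` C" using comm[OF dj] TC' j by auto
    ultimately show ?thesis
      using quot_coord_spec(1)[OF ds TC'] by (intro quot_coord_unique[OF quot_basis_image]) auto
  qed
  thus ?thesis unfolding basis_trace_def by simp
qed

end

lemma sum_fun_apply: "(sum g S) y = (\<Sum>s\<in>S. g s y)" for g :: "'i \<Rightarrow> 'b \<Rightarrow> rat"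
  by (induction S rule: infinite_finite_induct) (auto simp: plus_fun_def zero_fun_def)

lemma indep_zero_space_distinct:
  assumes "indep_mod zero_space cs"
  shows "distinct cs"
proof (rule ccontr)
  assume "\<not> distinct cs"
  then obtain i j where ij: "i < length cs" "j < length cs" "i \<noteq> j" "cs ! i = cs ! j"
    by (auto simp: distinct_conv_nth)
  define a where "a = map (\<lambda>k. if k = i then 1 else if k = j then -1 else (0::rat)) [0..<length cs]"
  have "lincomb a cs t = 0" for t
  proof -
    have "lincomb a cs t = (\<Sum>k<length cs. (if k = i then (cs ! k) t else 0) - (if k = j then (cs ! k) t else 0))"
      unfolding a_def lincomb_map by (rule sum.cong) (use ij in auto)
    also have "\<dots> = 0" using ij by (simp add: sum_subtractf)
    finally show ?thesis .
  qed
  hence "a ! i = 0" using assms ij unfolding indep_mod_def a_def zero_space_def by (simp add: fun_eq_iff)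
  thus False using ij unfolding a_def by simp
qed

lemma indep_zero_space_explicit:
  assumes ind: "indep_mod zero_space cs" and t: "t \<subseteq> set cs"
    and u: "(\<Sum>v\<in>t. (\<lambda>y. u v * v y)) = 0" and v: "v \<in> t"
  shows "u v = 0"
proof -
  define a where "a = map (\<lambda>i. if cs ! i \<in> t then u (cs ! i) else 0) [0..<length cs]"
  have "lincomb a cs y = 0" for y
  proof -
    have "lincomb a cs y = (\<Sum>i<length cs. (\<lambda>v. if v \<in> t then u v * v y else 0) (cs ! i))"
      unfolding a_def lincomb_map by (auto intro!: sum.cong)
    also have "\<dots> = (\<Sum>v\<in>set cs. if v \<in> t then u v * v y else 0)"
      using sum.reindex_bij_betw[OF bij_betw_nth[OF indep_zero_space_distinct[OF ind] refl refl]]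
      by simp
    also have "\<dots> = (\<Sum>v\<in>set cs \<inter> t. u v * v y)" by (simp add: sum.inter_restrict)
    also have "\<dots> = (\<Sum>v\<in>t. u v * v y)" using t by (simp add: Int_absorb1)
    also have "\<dots> = 0" using u sum_fun_apply[of "\<lambda>v y. u v * v y" t y] by simp
    finally show ?thesis .
  qed
  hence "lincomb a cs \<in> zero_space" by (simp add: zero_space_def fun_eq_iff)
  hence "\<forall>i<length cs. a ! i = 0" using ind unfolding indep_mod_def a_def by simp
  moreover obtain i where "i < length cs" "cs ! i = v" using t v by (metis in_set_conv_nth subsetD)
  ultimately show ?thesis using v unfolding a_def by auto
qed

lemma indep_zero_space_length_le:
  fixes cs :: "('b \<Rightarrow> rat) list"
  assumes fin: "finite S" and supported: "\<And>c y. c \<in> set cs \<Longrightarrow> c y \<noteq> 0 \<Longrightarrow> y \<in> S"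
    and ind: "indep_mod zero_space cs"
  shows "length cs \<le> card S"
proof -
  interpret V: vector_space "\<lambda>(r::rat) (f::'b \<Rightarrow> rat) y. r * f y"
    by unfold_locales (auto simp: fun_eq_iff algebra_simps plus_fun_def)
  define \<delta> where "\<delta> s = (\<lambda>y::'b. if y = s then (1::rat) else 0)" for s :: 'b
  have "set cs \<subseteq> V.span (\<delta> ` S)"
  proof
    fix c assume c: "c \<in> set cs"
    have "c = (\<Sum>s\<in>S. (\<lambda>y. c s * \<delta> s y))"
    proof
      fix y
      have "(\<Sum>s\<in>S. (\<lambda>y. c s * \<delta> s y)) y = (\<Sum>s\<in>S. if s = y then c y else 0)"
        unfolding sum_fun_apply by (rule sum.cong) (auto simp: \<delta>_def)
      also have "\<dots> = c y" using fin supported[OF c, of y] by auto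
      finally show "c y = (\<Sum>s\<in>S. (\<lambda>y. c s * \<delta> s y)) y" by simp
    qed
    also have "\<dots> \<in> V.span (\<delta> ` S)"
      by (intro V.span_sum V.span_scale V.span_base) auto
    finally show "c \<in> V.span (\<delta> ` S)" .
  qed
  moreover have "V.independent (set cs)"
  proof
    assume "V.dependent (set cs)"
    then obtain t u where tu: "t \<subseteq> set cs" "(\<Sum>v\<in>t. (\<lambda>y. u v * v y)) = 0" "\<exists>v\<in>t. u v \<noteq> 0"
      unfolding V.dependent_explicit by blast
    thus False using indep_zero_space_explicit[OF ind tu(1,2)] by blast
  qed
  ultimately have "card (set cs) \<le> card (\<delta> ` S)"
    using V.independent_span_bound[OF finite_imageI[OF fin]] by blast
  also have "\<dots> \<le> card S" using card_image_le[OF fin] .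
  finally show ?thesis using distinct_card[OF indep_zero_space_distinct[OF ind]] by simp
qed

lemma indep_mod_snoc:
  assumes sB: "fun_subspace B" and ind: "indep_mod B cs"
    and z: "\<And>a. length a = length cs \<Longrightarrow> \<not> cong_mod B z (lincomb a cs)"
  shows "indep_mod B (cs @ [z])"
  unfolding indep_mod_def
proof (intro allI impI)
  fix g i assume g: "length g = length (cs @ [z])" "lincomb g (cs @ [z]) \<in> B" "i < length (cs @ [z])"
  define a where "a = take (length cs) g"
  define r where "r = g ! length cs"
  have la: "length a = length cs" using g(1) by (simp add: a_def)
  have "drop (length cs) g = g ! length cs # drop (Suc (length cs)) g"
    by (rule Cons_nth_drop_Suc[symmetric]) (use g(1) in simp)
  hence "drop (length cs) g = [r]" using g(1) unfolding r_def by simp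
  hence gar: "g = a @ [r]" unfolding a_def by (metis append_take_drop_id)
  have sum: "(\<lambda>t. lincomb a cs t + r * z t) \<in> B"
    using g(2) unfolding gar lincomb_append[OF la, of "[r]" "[z]", simplified]
    by (simp add: lincomb_def)
  have r0: "r = 0"
  proof (rule ccontr)
    assume r: "r \<noteq> 0"
    define a' where "a' = map (\<lambda>i. - (a ! i) / r) [0..<length cs]"
    have "lincomb a' cs t = - lincomb a cs t / r" for t
      unfolding a'_def lincomb_map lincomb_def by (simp add: sum_divide_distrib[symmetric] sum_negf)
    hence "(\<lambda>t. (1 / r) * (\<lambda>t. lincomb a cs t + r * z t) t) = (\<lambda>t. z t - lincomb a' cs t)"
      using r by (intro ext) (simp add: field_simps)
    moreover have "(\<lambda>t. (1 / r) * (\<lambda>t. lincomb a cs t + r * z t) t) \<in> B"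
      by (rule fun_subspace_scale[OF sB sum])
    ultimately have "cong_mod B z (lincomb a' cs)" by (simp add: cong_mod_def)
    thus False using z[of a'] by (simp add: a'_def)
  qed
  hence "\<forall>j<length cs. a ! j = 0" using sum ind la unfolding indep_mod_def by simp
  thus "g ! i = 0" using g(3) r0 la unfolding gar by (auto simp: nth_append less_Suc_eq)
qed

lemma quot_basis_exists:
  assumes sB: "fun_subspace B" and sZ: "fun_subspace Z" and BZ: "B \<subseteq> Z" and fin: "finite S"
    and supported: "\<And>z y. z \<in> Z \<Longrightarrow> z y \<noteq> 0 \<Longrightarrow> y \<in> S"
  shows "\<exists>cs. quot_basis Z B cs"
proof -
  define L where "L = {cs. set cs \<subseteq> Z \<and> indep_mod B cs}"
  have bound: "length cs \<le> card S" if "cs \<in> L" for cs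
  proof (rule indep_zero_space_length_le[OF fin])
    show "\<And>c y. c \<in> set cs \<Longrightarrow> c y \<noteq> 0 \<Longrightarrow> y \<in> S" using that supported unfolding L_def by blast
    show "indep_mod zero_space cs"
      unfolding indep_mod_def
    proof (intro allI impI)
      fix a i assume a: "length a = length cs" "lincomb a cs \<in> zero_space" "i < length cs"
      have "lincomb a cs \<in> B" using a(2) fun_subspace_zero[OF sB] by (simp add: zero_space_def)
      thus "a ! i = 0" using that a unfolding L_def indep_mod_def by blast
    qed
  qed
  have "[] \<in> L" unfolding L_def indep_mod_def by simp
  have "length ` L \<subseteq> {..card S}" using bound by auto
  hence finL: "finite (length ` L)" by (rule finite_subset) simp
  have "Max (length ` L) \<in> length ` L" using finL \<open>[] \<in> L\<close> by (intro Max_in) auto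
  then obtain cs where cs: "cs \<in> L" "Max (length ` L) = length cs" by blast
  have "set cs \<subseteq> Z" "indep_mod B cs" using cs(1) unfolding L_def by auto
  moreover have "spans_mod Z B cs"
    unfolding spans_mod_def
  proof (rule ccontr)
    assume "\<not> (\<forall>z\<in>Z. \<exists>a. length a = length cs \<and> cong_mod B z (lincomb a cs))"
    then obtain z where z: "z \<in> Z" "\<And>a. length a = length cs \<Longrightarrow> \<not> cong_mod B z (lincomb a cs)"
      by blast
    have "cs @ [z] \<in> L"
      using \<open>set cs \<subseteq> Z\<close> z(1) indep_mod_snoc[OF sB \<open>indep_mod B cs\<close> z(2)] unfolding L_def by simp
    hence "length (cs @ [z]) \<le> Max (length ` L)" by (intro Max_ge[OF finL]) blast
    thus False using cs(2) by simp
  qed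
  ultimately show ?thesis using quot_basisI[OF sB] by blast
qed

lemma quot_trace_add:
  assumes sB: "fun_subspace B" and sZ: "fun_subspace Z" and sV: "fun_subspace V"
    and BZ: "B \<subseteq> Z" and ZV: "Z \<subseteq> V"
    and finS: "finite S" and supported: "\<And>v y. v \<in> V \<Longrightarrow> v y \<noteq> 0 \<Longrightarrow> y \<in> S"
    and lT: "fun_linear T" and TV: "T ` V \<subseteq> V" and TZ: "T ` Z \<subseteq> Z" and TB: "T ` B \<subseteq> B"
  shows "quot_trace V B T = quot_trace V Z T + quot_trace Z B T"
proof -
  obtain cs where cs: "quot_basis Z B cs"
    using quot_basis_exists[OF sB sZ BZ finS] supported ZV by blast
  obtain ds where ds: "quot_basis V Z ds"
    using quot_basis_exists[OF sZ sV ZV finS] supported by blast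
  note filtration = sB sZ sV BZ ZV cs ds
  have "quot_trace V B T = basis_trace B (cs @ ds) T"
    using quot_trace_eq_basis_trace[OF sB lT TV TB quot_basis_append[OF filtration]] .
  also have "\<dots> = basis_trace B cs T + basis_trace Z ds T"
    using basis_trace_append[OF filtration TV TZ] .
  also have "\<dots> = quot_trace Z B T + quot_trace V Z T"
    using quot_trace_eq_basis_trace[OF sB lT TZ TB cs] quot_trace_eq_basis_trace[OF sZ lT TV TZ ds]
    by simp
  finally show ?thesis by simp
qed

lemma quot_trace_self:
  assumes "fun_subspace V" "fun_linear T" "T ` V \<subseteq> V"
  shows "quot_trace V V T = 0"
proof -
  have "quot_basis V V []" by (rule quot_basisI[OF assms(1)]) (auto simp: indep_mod_def spans_mod_def cong_mod_def lincomb_def)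
  thus ?thesis using quot_trace_eq_basis_trace[OF assms(1-3) assms(3)] by (simp add: basis_trace_def)
qed

section \<open>Alternating functions on lists\<close>

definition alternating :: "('a list \<Rightarrow> rat) \<Rightarrow> bool" where
  "alternating c \<longleftrightarrow> (\<forall>xs p. p permutes {..<length xs} \<longrightarrow> c (permute_list p xs) = of_int (sign p) * c xs)"

lemma alternatingD: "alternating c \<Longrightarrow> p permutes {..<length xs} \<Longrightarrow> c (permute_list p xs) = of_int (sign p) * c xs"
  by (simp add: alternating_def)

primrec list_index :: "'a \<Rightarrow> 'a list \<Rightarrow> nat" where
  "list_index a [] = 0"
| "list_index a (x # xs) = (if x = a then 0 else Suc (list_index a xs))"

lemma permutes_lift_Suc:
  assumes p: "p permutes {..<n}"
  obtains p' where "p' permutes {..<Suc n}" "sign p' = sign p" "p' 0 = 0" "\<And>i. p' (Suc i) = Suc (p i)"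
proof -
  define p' where "p' = map_permutation {..<n} Suc p"
  have inj: "inj_on Suc {..<n}" by simp
  have bij: "bij_betw Suc {..<n} (Suc ` {..<n})" by (simp add: bij_betw_imageI)
  have "p' permutes (Suc ` {..<n})" unfolding p'_def by (rule map_permutation_permutes[OF bij p])
  hence 1: "p' permutes {..<Suc n}" by (rule permutes_subset) auto
  have 2: "sign p' = sign p" unfolding p'_def by (rule sign_map_permutation[OF inj p]) simp
  have 3: "p' 0 = 0" unfolding p'_def map_permutation_def restrict_id_def by auto
  have 4: "p' (Suc i) = Suc (p i)" for i
  proof (cases "i < n")
    case True
    have "inv_into {..<n} Suc (Suc i) = i" using True by (intro inv_into_f_eq) auto
    thus ?thesis using True unfolding p'_def map_permutation_def restrict_id_def by auto
  next
    case False
    hence "p i = i" using p by (intro permutes_not_in) auto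
    thus ?thesis using False unfolding p'_def map_permutation_def restrict_id_def by auto
  qed
  show ?thesis using that 1 2 3 4 by blast
qed

lemma permute_list_Cons_lift:
  assumes "p' 0 = 0" "\<And>i. p' (Suc i) = Suc (p i)"
  shows "permute_list p' (x # u) = x # permute_list p u"
  unfolding permute_list_def using assms
  by (simp add: upt_conv_Cons map_Suc_upt[symmetric] del: upt_Suc)

lemma alternating_Cons: assumes "alternating c" shows "alternating (\<lambda>u. c (x # u))"
  unfolding alternating_def
proof (intro allI impI)
  fix u :: "'a list" and p assume p: "p permutes {..<length u}"
  obtain p' where p': "p' permutes {..<Suc (length u)}" "sign p' = sign p" "p' 0 = 0" "\<And>i. p' (Suc i) = Suc (p i)"
    using permutes_lift_Suc[OF p] by blast
  have "c (x # permute_list p u) = c (permute_list p' (x # u))"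
    using permute_list_Cons_lift[of p' p x u] p' by simp
  also have "\<dots> = of_int (sign p') * c (x # u)" using alternatingD[OF assms, of p' "x # u"] p' by simp
  finally show "c (x # permute_list p u) = of_int (sign p) * c (x # u)" using p' by simp
qed

lemma alternating_swap_heads: assumes "alternating c" shows "c (y # x # r) = - c (x # y # r)"
proof -
  have t: "transpose 0 1 permutes {..<length (x # y # r)}" by (intro permutes_swap_id) auto
  have "permute_list (transpose 0 1) (x # y # r) = y # x # r"
  proof (rule nth_equalityI)
    fix i assume "i < length (permute_list (transpose 0 1) (x # y # r))"
    hence i: "i < length (x # y # r)" by simp
    show "permute_list (transpose 0 1) (x # y # r) ! i = (y # x # r) ! i"
      using permute_list_nth[OF t i] by (cases i; cases "i - 1") (auto simp: Transposition.transpose_def)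
  qed simp
  hence "c (y # x # r) = of_int (sign (transpose (0::nat) 1)) * c (x # y # r)"
    using alternatingD[OF assms t] by simp
  thus ?thesis by (simp add: sign_swap_id)
qed

lemma alternating_move_to_front:
  assumes "alternating c" "a \<in> set u"
  shows "c (a # remove1 a u) = (-1) ^ list_index a u * c u"
  using assms
proof (induction u arbitrary: c)
  case Nil thus ?case by simp
next
  case (Cons x u)
  show ?case
  proof (cases "x = a")
    case True thus ?thesis by simp
  next
    case False
    hence au: "a \<in> set u" using Cons.prems by simp
    have "c (a # remove1 a (x # u)) = c (a # x # remove1 a u)" using False by simp
    also have "\<dots> = - c (x # a # remove1 a u)" by (rule alternating_swap_heads[OF Cons.prems(1)])
    also have "c (x # a # remove1 a u) = (-1) ^ list_index a u * c (x # u)"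
      using Cons.IH[OF alternating_Cons[OF Cons.prems(1)] au] .
    finally show ?thesis using False by simp
  qed
qed

lemma list_index_less: "a \<in> set u \<Longrightarrow> list_index a u < length u"
  by (induction u) auto

lemma nth_list_index: "a \<in> set u \<Longrightarrow> u ! list_index a u = a"
  by (induction u) auto

lemma list_index_nth: "distinct u \<Longrightarrow> i < length u \<Longrightarrow> list_index (u ! i) u = i"
proof (induction u arbitrary: i)
  case Nil thus ?case by simp
next
  case (Cons x u)
  show ?case
  proof (cases i)
    case 0 thus ?thesis by simp
  next
    case (Suc j)
    hence "u ! j \<noteq> x" using Cons.prems by (auto simp: nth_mem)
    thus ?thesis using Cons Suc by simp
  qed
qed

lemma take_remove1_list_index:
  "a \<in> set u \<Longrightarrow> take (list_index a u) (remove1 a u) @ a # drop (list_index a u) (remove1 a u) = u"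
  by (induction u) auto

lemma list_index_insert:
  assumes "a \<notin> set (take j xs)" "j \<le> length xs"
  shows "list_index a (take j xs @ a # drop j xs) = j" "remove1 a (take j xs @ a # drop j xs) = xs"
  using assms
proof (induction xs arbitrary: j)
  case Nil
  { case 1 thus ?case by simp }
  { case 2 thus ?case by simp }
next
  case (Cons x xs)
  { case 1 thus ?case using Cons by (cases j) auto }
  { case 2 thus ?case using Cons by (cases j) auto }
qed

text \<open>\<open>elementary_chain u\<close> is the generator \<open>\<langle>u\<rangle>\<close> of an oriented simplex: it takes the value
\<open>sign p\<close> at every reordering \<open>permute_list p u\<close> and vanishes elsewhere.\<close>

definition elementary_chain :: "'a list \<Rightarrow> 'a list \<Rightarrow> rat" where
  "elementary_chain u w = (if \<exists>p. p permutes {..<length u} \<and> w = permute_list p u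
     then of_int (sign (THE p. p permutes {..<length u} \<and> w = permute_list p u)) else 0)"

lemma permute_list_inj_permutes:
  assumes "distinct u" "p permutes {..<length u}" "q permutes {..<length u}"
    "permute_list p u = permute_list q u"
  shows "p = q"
proof
  fix i
  show "p i = q i"
  proof (cases "i < length u")
    case True
    have "permute_list p u ! i = permute_list q u ! i" using assms(4) by simp
    hence "u ! p i = u ! q i" using permute_list_nth[OF assms(2) True] permute_list_nth[OF assms(3) True] by simp
    moreover have "p i < length u" using permutes_in_image[OF assms(2), of i] True by simp
    moreover have "q i < length u" using permutes_in_image[OF assms(3), of i] True by simp
    ultimately show ?thesis using assms(1) nth_eq_iff_index_eq by blast
  next
    case False
    thus ?thesis using assms(2,3) by (simp add: permutes_not_in)
  qed
qed

lemma elementary_chain_permute: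
  assumes "distinct u" "p permutes {..<length u}"
  shows "elementary_chain u (permute_list p u) = of_int (sign p)"
proof -
  have "(THE q. q permutes {..<length u} \<and> permute_list p u = permute_list q u) = p"
    by (rule the_equality) (use assms permute_list_inj_permutes in auto)
  thus ?thesis unfolding elementary_chain_def using assms by auto
qed

lemma permute_list_inv:
  assumes "p permutes {..<length w}"
  shows "permute_list (inv p) (permute_list p w) = w"
proof -
  have "inv p permutes {..<length w}" using permutes_inv[OF assms] .
  hence "permute_list (p \<circ> inv p) w = permute_list (inv p) (permute_list p w)"
    by (rule permute_list_compose)
  moreover have "p \<circ> inv p = id" using permutes_inv_o(1)[OF assms] .
  ultimately show ?thesis by simp
qed

lemma alternating_elementary_chain:
  assumes du: "distinct u"
  shows "alternating (elementary_chain u)"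
  unfolding alternating_def
proof (intro allI impI)
  fix w :: "'a list" and q assume q: "q permutes {..<length w}"
  show "elementary_chain u (permute_list q w) = of_int (sign q) * elementary_chain u w"
  proof (cases "\<exists>p. p permutes {..<length u} \<and> w = permute_list p u")
    case True
    then obtain p where p: "p permutes {..<length u}" "w = permute_list p u" by blast
    have lw: "length w = length u" using p by simp
    have q': "q permutes {..<length u}" using q lw by simp
    have "permute_list q w = permute_list (p \<circ> q) u"
      using permute_list_compose[of q u p] q' p by simp
    moreover have "(p \<circ> q) permutes {..<length u}" by (rule permutes_compose[OF q' p(1)])
    ultimately have "elementary_chain u (permute_list q w) = of_int (sign (p \<circ> q))" using elementary_chain_permute[OF du] by simp
    also have "sign (p \<circ> q) = sign p * sign q"
      by (rule sign_compose) (use p(1) q' in \<open>auto intro: permutes_imp_permutation\<close>)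
    finally show ?thesis using elementary_chain_permute[OF du p(1)] p(2) by simp
  next
    case False
    have "\<not> (\<exists>p. p permutes {..<length u} \<and> permute_list q w = permute_list p u)"
    proof
      assume "\<exists>p. p permutes {..<length u} \<and> permute_list q w = permute_list p u"
      then obtain p where p: "p permutes {..<length u}" "permute_list q w = permute_list p u" by blast
      have lw: "length w = length u" using p(2) by (metis length_permute_list)
      have iq: "inv q permutes {..<length u}" using permutes_inv[OF q] lw by simp
      have "w = permute_list (inv q) (permute_list p u)" using permute_list_inv[OF q] p(2) by simp
      also have "\<dots> = permute_list (p \<circ> inv q) u" using permute_list_compose[of "inv q" u p] iq by simp
      finally have "w = permute_list (p \<circ> inv q) u" .
      moreover have "(p \<circ> inv q) permutes {..<length u}" by (rule permutes_compose[OF iq p(1)])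
      ultimately show False using False by blast
    qed
    thus ?thesis using False unfolding elementary_chain_def by simp
  qed
qed

lemma elementary_chain_self: "distinct u \<Longrightarrow> elementary_chain u u = 1"
  using elementary_chain_permute[of u id] by (simp add: permutes_id)

lemma elementary_chain_nonzero:
  assumes "elementary_chain u w \<noteq> 0" "distinct u"
  shows "length w = length u" "set w = set u" "distinct w"
proof -
  obtain p where p: "p permutes {..<length u}" "w = permute_list p u"
    using assms(1) unfolding elementary_chain_def by (auto split: if_splits)
  thus "length w = length u" "set w = set u" "distinct w" using assms(2) by auto
qed

lemma neg_one_power_square: "(-1::rat) ^ n * (-1) ^ n = 1"
  by (simp flip: power_add mult_2)

lemma cone_coeff_permute:
  assumes f: "alternating f" and du: "distinct u" and a: "a \<in> set u" and q: "q permutes {..<length u}"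
  shows "(-1) ^ list_index a (permute_list q u) * f (remove1 a (permute_list q u))
       = of_int (sign q) * ((-1) ^ list_index a u * f (remove1 a u))"
proof -
  define u' where "u' = permute_list q u"
  define i where "i = list_index a u"
  define i' where "i' = list_index a u'"
  define r where "r = remove1 a u"
  define r' where "r' = remove1 a u'"
  have mu: "mset u' = mset u" unfolding u'_def using q by simp
  have a': "a \<in> set u'" using a mu by (metis set_mset_mset)
  have "mset r' = mset r" unfolding r'_def r_def using mu by simp
  then obtain p where p: "p permutes {..<length r}" "permute_list p r = r'"
    using mset_eq_permutation by metis
  have fr: "f r' = of_int (sign p) * f r" using alternatingD[OF f p(1)] p(2) by simp
  txt \<open>Compare the signs by evaluating the alternating function \<open>elementary_chain u\<close> at \<open>a # r'\<close>.\<close>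
  let ?A = "elementary_chain u"
  have A: "alternating ?A" using alternating_elementary_chain[OF du] .
  have "(-1) ^ i' * of_int (sign q) = ?A (a # r')"
    using alternating_move_to_front[OF A a'] elementary_chain_permute[OF du q]
    unfolding i'_def r'_def u'_def by simp
  also have "\<dots> = of_int (sign p) * ?A (a # r)"
    using alternatingD[OF alternating_Cons[OF A] p(1)] p(2) by simp
  also have "?A (a # r) = (-1) ^ i"
    using alternating_move_to_front[OF A a] elementary_chain_self[OF du] unfolding i_def r_def by simp
  finally have signs: "(-1) ^ i' * of_int (sign q) = of_int (sign p) * (-1::rat) ^ i" .
  have "(-1) ^ i' * f r' = (-1) ^ i' * (of_int (sign p) * (-1) ^ i * (-1) ^ i) * f r"
    using fr neg_one_power_square[of i] by (simp add: mult.assoc)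
  also have "\<dots> = ((-1) ^ i' * (-1) ^ i') * of_int (sign q) * ((-1) ^ i * f r)"
    unfolding signs[symmetric] by (simp add: mult_ac)
  finally show ?thesis using neg_one_power_square[of i'] unfolding i_def i'_def r_def r'_def u'_def by simp
qed

lemma permute_list_inv_right:
  assumes "p permutes {..<length w}"
  shows "permute_list p (permute_list (inv p) w) = w"
proof -
  have "permute_list (inv p \<circ> p) w = permute_list p (permute_list (inv p) w)"
    by (rule permute_list_compose[OF assms])
  moreover have "inv p \<circ> p = id" using permutes_inv_o(2)[OF assms] .
  ultimately show ?thesis by simp
qed

lemma sum_zero_sign_reversing_involution:
  assumes "finite S" "\<And>x. x \<in> S \<Longrightarrow> \<phi> x \<in> S" "\<And>x. x \<in> S \<Longrightarrow> \<phi> (\<phi> x) = x"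
    "\<And>x. x \<in> S \<Longrightarrow> F (\<phi> x) = - F x"
  shows "sum F S = (0::rat)"
proof -
  have bij: "bij_betw \<phi> S S"
    by (rule bij_betwI[of _ _ _ \<phi>]) (use assms in auto)
  have "sum F S = sum (F \<circ> \<phi>) S" using sum.reindex_bij_betw[OF bij, of F] by simp
  also have "\<dots> = - sum F S" using assms(4) by (simp add: sum_negf)
  finally show ?thesis by simp
qed

lemma alternating_swap:
  assumes "alternating c" "i < length l" "j < length l" "i \<noteq> j"
  shows "c (l[i := l ! j, j := l ! i]) = - c l"
proof -
  have t: "transpose i j permutes {..<length l}" using assms by (intro permutes_swap_id) auto
  have "permute_list (transpose i j) l = l[i := l ! j, j := l ! i]"
  proof (rule nth_equalityI)
    fix m assume "m < length (permute_list (transpose i j) l)"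
    hence m: "m < length l" by simp
    show "permute_list (transpose i j) l ! m = l[i := l ! j, j := l ! i] ! m"
      using permute_list_nth[OF t m] assms m by (auto simp: Transposition.transpose_def nth_list_update)
  qed simp
  hence "c (l[i := l ! j, j := l ! i]) = of_int (sign (transpose i j)) * c l" using alternatingD[OF assms(1) t] by simp
  thus ?thesis using assms(4) by (simp add: sign_swap_id)
qed

section \<open>Chains as alternating functions\<close>

text \<open>\<open>push_chain\<close> and \<open>face_sum\<close> are \<open>chain_map\<close> and \<open>boundary\<close> without the guards excluding
the empty list; on chains they agree (\<open>chain_map_eq_push_chain\<close>, \<open>boundary_eq_face_sum\<close>).\<close>

definition simplex_list :: "'a set \<Rightarrow> ('a \<Rightarrow> 'a \<Rightarrow> bool) \<Rightarrow> 'a list \<Rightarrow> bool" where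
  "simplex_list X adj ys \<longleftrightarrow> distinct ys \<and> set ys \<subseteq> X \<and> (\<forall>x\<in>set ys. \<forall>y\<in>set ys. x \<noteq> y \<longrightarrow> adj x y)"

definition fibre_lists :: "'a set \<Rightarrow> ('a \<Rightarrow> 'a) \<Rightarrow> 'a list \<Rightarrow> 'a list set" where
  "fibre_lists X k ys = {xs. set xs \<subseteq> X \<and> map k xs = ys}"

definition push_chain :: "'a set \<Rightarrow> ('a \<Rightarrow> 'a \<Rightarrow> bool) \<Rightarrow> ('a \<Rightarrow> 'a) \<Rightarrow> ('a list \<Rightarrow> rat) \<Rightarrow> 'a list \<Rightarrow> rat" where
  "push_chain X adj k c ys = (if simplex_list X adj ys then (\<Sum>xs\<in>fibre_lists X k ys. c xs) else 0)"

definition face_sum :: "'a set \<Rightarrow> ('a list \<Rightarrow> rat) \<Rightarrow> 'a list \<Rightarrow> rat" where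
  "face_sum X c ys = (\<Sum>v\<in>X. c (v # ys))"

definition simplex_supported :: "'a set \<Rightarrow> ('a \<Rightarrow> 'a \<Rightarrow> bool) \<Rightarrow> ('a list \<Rightarrow> rat) \<Rightarrow> bool" where
  "simplex_supported X adj c \<longleftrightarrow> (\<forall>xs. c xs \<noteq> 0 \<longrightarrow> simplex_list X adj xs)"

lemma simplex_list_Cons: "simplex_list X adj (v # ys) \<Longrightarrow> simplex_list X adj ys"
  by (auto simp: simplex_list_def)

lemma ordered_simplex_iff_simplex_list: "ordered_simplex X adj ys \<longleftrightarrow> ys \<noteq> [] \<and> simplex_list X adj ys"
  by (auto simp: ordered_simplex_def simplex_list_def)

lemma simplex_list_permute: "p permutes {..<length ys} \<Longrightarrow> simplex_list X adj (permute_list p ys) \<longleftrightarrow> simplex_list X adj ys"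
  by (simp add: simplex_list_def)

lemma finite_fibre_lists: "finite X \<Longrightarrow> finite (fibre_lists X k ys)"
  by (rule finite_subset[OF _ finite_lists_length_eq[of X "length ys"]]) (auto simp: fibre_lists_def)

lemma fibre_lists_Nil: "fibre_lists X k [] = {[]}"
  by (auto simp: fibre_lists_def)

lemma chain_map_eq_push_chain:
  assumes "c [] = 0"
  shows "chain_map X adj k c = push_chain X adj k c"
proof
  fix ys show "chain_map X adj k c ys = push_chain X adj k c ys"
  proof (cases "ys = []")
    case True thus ?thesis using assms by (simp add: chain_map_def push_chain_def fibre_lists_Nil ordered_simplex_def)
  next
    case False thus ?thesis by (simp add: chain_map_def push_chain_def fibre_lists_def ordered_simplex_iff_simplex_list)
  qed
qed

lemma boundary_eq_face_sum:
  assumes "simplex_supported X adj c"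
  shows "boundary X adj c = (\<lambda>ys. if ys = [] then 0 else face_sum X c ys)"
proof
  fix ys
  show "boundary X adj c ys = (if ys = [] then 0 else face_sum X c ys)"
  proof (cases "simplex_list X adj ys")
    case True thus ?thesis by (simp add: boundary_def face_sum_def ordered_simplex_iff_simplex_list)
  next
    case False
    have "c (v # ys) = 0" for v
    proof (rule ccontr)
      assume "c (v # ys) \<noteq> 0"
      hence "simplex_list X adj (v # ys)" using assms by (simp add: simplex_supported_def)
      from simplex_list_Cons[OF this] False show False by contradiction
    qed
    thus ?thesis using False by (simp add: boundary_def face_sum_def ordered_simplex_iff_simplex_list)
  qed
qed

lemma chains_iff: "c \<in> chains X adj q \<longleftrightarrow> (\<forall>xs. c xs \<noteq> 0 \<longrightarrow> ordered_simplex X adj xs \<and> length xs = Suc q) \<and> alternating c"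
  by (simp add: chains_def alternating_def)

lemma fibre_lists_permute:
  assumes p: "p permutes {..<length ys}"
  shows "fibre_lists X k (permute_list p ys) = permute_list p ` fibre_lists X k ys"
proof
  have pl: "p permutes {..<length xs}" if "xs \<in> fibre_lists X k ys" for xs
    using p that by (auto simp: fibre_lists_def)
  show "permute_list p ` fibre_lists X k ys \<subseteq> fibre_lists X k (permute_list p ys)"
  proof
    fix xs' assume "xs' \<in> permute_list p ` fibre_lists X k ys"
    then obtain xs where xs: "xs \<in> fibre_lists X k ys" "xs' = permute_list p xs" by blast
    have "map k (permute_list p xs) = permute_list p (map k xs)"
      using permute_list_map[OF pl[OF xs(1)], of k] by simp
    thus "xs' \<in> fibre_lists X k (permute_list p ys)" using xs pl[OF xs(1)] by (auto simp: fibre_lists_def)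
  qed
  show "fibre_lists X k (permute_list p ys) \<subseteq> permute_list p ` fibre_lists X k ys"
  proof
    fix xs' assume xs': "xs' \<in> fibre_lists X k (permute_list p ys)"
    hence "length (map k xs') = length (permute_list p ys)" by (simp add: fibre_lists_def)
    hence l: "length xs' = length ys" by simp
    have ip: "inv p permutes {..<length xs'}" using permutes_inv[OF p] l by simp
    define xs where "xs = permute_list (inv p) xs'"
    have "map k xs = permute_list (inv p) (map k xs')" unfolding xs_def using permute_list_map[OF ip, of k] by simp
    also have "\<dots> = ys" using xs' permute_list_inv[OF p] by (simp add: fibre_lists_def)
    finally have "xs \<in> fibre_lists X k ys" using xs' ip unfolding xs_def by (auto simp: fibre_lists_def)
    moreover have "xs' = permute_list p xs" unfolding xs_def using permute_list_inv_right[of p xs'] p l by simp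
    ultimately show "xs' \<in> permute_list p ` fibre_lists X k ys" by blast
  qed
qed

lemma alternating_push_chain:
  assumes "alternating c"
  shows "alternating (push_chain X adj k c)"
  unfolding alternating_def
proof (intro allI impI)
  fix ys :: "'a list" and p assume p: "p permutes {..<length ys}"
  have pl: "p permutes {..<length xs}" if "xs \<in> fibre_lists X k ys" for xs
    using p that by (auto simp: fibre_lists_def)
  have "inj_on (permute_list p) (fibre_lists X k ys)"
  proof
    fix x y assume x: "x \<in> fibre_lists X k ys" and y: "y \<in> fibre_lists X k ys"
      and "permute_list p x = permute_list p y"
    hence "permute_list (inv p) (permute_list p x) = permute_list (inv p) (permute_list p y)" by simp
    thus "x = y" using permute_list_inv[OF pl[OF x]] permute_list_inv[OF pl[OF y]] by simp
  qed
  hence "(\<Sum>xs\<in>fibre_lists X k (permute_list p ys). c xs) = (\<Sum>xs\<in>fibre_lists X k ys. c (permute_list p xs))"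
    unfolding fibre_lists_permute[OF p] by (rule sum.reindex[unfolded o_def])
  also have "\<dots> = (\<Sum>xs\<in>fibre_lists X k ys. of_int (sign p) * c xs)"
    by (rule sum.cong) (auto intro: alternatingD[OF assms] pl)
  finally show "push_chain X adj k c (permute_list p ys) = of_int (sign p) * push_chain X adj k c ys"
    unfolding push_chain_def using simplex_list_permute[OF p] by (simp add: sum_distrib_left)
qed

lemma sum_fibre_lists_Cons:
  assumes "finite X"
  shows "(\<Sum>xs\<in>fibre_lists X k (v # ys). F xs) = (\<Sum>x\<in>X. if k x = v then (\<Sum>xs\<in>fibre_lists X k ys. F (x # xs)) else 0)"
proof -
  have img: "fibre_lists X k (v # ys) = (\<lambda>(x, xs). x # xs) ` ({x \<in> X. k x = v} \<times> fibre_lists X k ys)"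
  proof
    show "fibre_lists X k (v # ys) \<subseteq> (\<lambda>(x, xs). x # xs) ` ({x \<in> X. k x = v} \<times> fibre_lists X k ys)"
    proof
      fix l assume "l \<in> fibre_lists X k (v # ys)"
      then obtain x xs where h: "l = x # xs" "x \<in> X" "k x = v" "xs \<in> fibre_lists X k ys"
        by (cases l) (auto simp: fibre_lists_def)
      show "l \<in> (\<lambda>(x, xs). x # xs) ` ({x \<in> X. k x = v} \<times> fibre_lists X k ys)"
        by (rule image_eqI[of _ _ "(x, xs)"]) (use h in auto)
    qed
  qed (auto simp: fibre_lists_def)
  have inj: "inj_on (\<lambda>(x, xs). x # xs) ({x \<in> X. k x = v} \<times> fibre_lists X k ys)"
    by (auto simp: inj_on_def)
  have "(\<Sum>xs\<in>fibre_lists X k (v # ys). F xs) = (\<Sum>(x, xs)\<in>{x \<in> X. k x = v} \<times> fibre_lists X k ys. F (x # xs))"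
    unfolding img by (subst sum.reindex[OF inj]) (simp add: case_prod_unfold)
  also have "\<dots> = (\<Sum>x\<in>{x \<in> X. k x = v}. \<Sum>xs\<in>fibre_lists X k ys. F (x # xs))"
    by (rule sum.cartesian_product[symmetric])
  also have "\<dots> = (\<Sum>x\<in>X. if k x = v then (\<Sum>xs\<in>fibre_lists X k ys. F (x # xs)) else 0)"
    using assms by (simp add: sum.inter_filter)
  finally show ?thesis .
qed


lemma simplex_list_map:
  assumes kX: "\<And>x. x \<in> X \<Longrightarrow> k x \<in> X"
    and kc: "\<And>x y. x \<in> X \<Longrightarrow> y \<in> X \<Longrightarrow> adj x y \<Longrightarrow> adj_eq adj (k x) (k y)"
    and s: "simplex_list X adj xs" and d: "distinct (map k xs)"
  shows "simplex_list X adj (map k xs)"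
proof -
  have "adj a b" if ab: "a \<in> k ` set xs" "b \<in> k ` set xs" "a \<noteq> b" for a b
  proof -
    obtain u v where uv: "u \<in> set xs" "v \<in> set xs" "a = k u" "b = k v" using ab(1,2) by blast
    hence "adj u v" "u \<in> X" "v \<in> X" using ab(3) s unfolding simplex_list_def by auto
    thus ?thesis using kc uv ab(3) by (auto simp: adj_eq_def)
  qed
  thus ?thesis using s d kX unfolding simplex_list_def by auto
qed

text \<open>Preimages of a simplex containing a repeated vertex cancel in pairs: swap the head \<open>x\<close>
with the entry of the tail having the same image.\<close>

lemma sum_fibre_lists_repeated_zero:
  assumes fin: "finite X" and ac: "alternating c"
  shows "(\<Sum>x\<in>{x \<in> X. k x \<in> set ys}. \<Sum>xs\<in>fibre_lists X k ys. c (x # xs)) = 0"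
proof -
  let ?S = "(\<lambda>(x, xs). x # xs) ` ({x \<in> X. k x \<in> set ys} \<times> fibre_lists X k ys)"
  define phi where
    "phi l = (case l of [] \<Rightarrow> [] | x # xs \<Rightarrow> xs ! list_index (k x) ys # xs[list_index (k x) ys := x])" for l
  have phi_Cons: "phi (y # zs) = zs ! list_index (k y) ys # zs[list_index (k y) ys := y]" for y zs
    by (simp add: phi_def)
  have mem: "l \<in> ?S \<longleftrightarrow> (\<exists>x xs. l = x # xs \<and> x \<in> X \<and> k x \<in> set ys \<and> set xs \<subseteq> X \<and> map k xs = ys)" for l
    by (auto simp: fibre_lists_def)
  have "(\<Sum>x\<in>{x \<in> X. k x \<in> set ys}. \<Sum>xs\<in>fibre_lists X k ys. c (x # xs))
      = (\<Sum>(x, xs)\<in>{x \<in> X. k x \<in> set ys} \<times> fibre_lists X k ys. c (x # xs))"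
    by (rule sum.cartesian_product)
  also have "\<dots> = (\<Sum>l\<in>?S. c l)"
    by (subst sum.reindex) (auto simp: inj_on_def case_prod_unfold)
  also have "\<dots> = 0"
  proof (rule sum_zero_sign_reversing_involution[where \<phi> = phi])
    show "finite ?S" using fin finite_fibre_lists[OF fin] by auto
    fix l assume "l \<in> ?S"
    then obtain x xs where h: "l = x # xs" "x \<in> X" "k x \<in> set ys" "set xs \<subseteq> X" "map k xs = ys"
      using mem by blast
    define j where "j = list_index (k x) ys"
    have jl: "j < length xs" using list_index_less[OF h(3)] h(5) unfolding j_def by auto
    have ysj: "ys ! j = k x" using nth_list_index[OF h(3)] unfolding j_def .
    have kxsj: "k (xs ! j) = k x" using ysj h(5) jl by auto
    have phil: "phi l = xs ! j # xs[j := x]" by (simp add: phi_Cons j_def h(1))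
    show "phi l \<in> ?S"
      unfolding mem phil
    proof (intro exI conjI)
      show "xs ! j \<in> X" using h(4) jl by auto
      show "k (xs ! j) \<in> set ys" using kxsj h(3) by simp
      show "set (xs[j := x]) \<subseteq> X" using h(2,4) set_update_subset_insert by fastforce
      have "ys[j := k x] = ys" using list_update_id[of ys j] ysj by simp
      thus "map k (xs[j := x]) = ys" using h(5) by (simp add: map_update)
    qed simp
    have "list_index (k (xs ! j)) ys = j" using kxsj j_def by simp
    thus "phi (phi l) = l" unfolding phil phi_Cons using jl h(1) by simp
    have "phi l = l[0 := l ! Suc j, Suc j := l ! 0]" using phil h(1) by simp
    thus "c (phi l) = - c l" using alternating_swap[OF ac, of 0 l "Suc j"] jl h(1) by simp
  qed
  finally show ?thesis .
qed

lemma face_sum_push_chain_simplex: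
  assumes fin: "finite X" and kX: "\<And>x. x \<in> X \<Longrightarrow> k x \<in> X"
  shows "face_sum X (push_chain X adj k c) ys
    = (\<Sum>x\<in>X. if simplex_list X adj (k x # ys) then \<Sum>xs\<in>fibre_lists X k ys. c (x # xs) else 0)"
proof -
  define G where "G x = (\<Sum>xs\<in>fibre_lists X k ys. c (x # xs))" for x
  have "face_sum X (push_chain X adj k c) ys
      = (\<Sum>v\<in>X. if simplex_list X adj (v # ys) then (\<Sum>x\<in>X. if k x = v then G x else 0) else 0)"
    unfolding face_sum_def push_chain_def G_def
    by (intro sum.cong refl) (simp add: sum_fibre_lists_Cons[OF fin])
  also have "\<dots> = (\<Sum>v\<in>X. \<Sum>x\<in>X. if v = k x then (if simplex_list X adj (k x # ys) then G x else 0) else 0)"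
    by (intro sum.cong refl) (auto intro!: sum.cong sum.neutral)
  also have "\<dots> = (\<Sum>x\<in>X. \<Sum>v\<in>X. if v = k x then (if simplex_list X adj (k x # ys) then G x else 0) else 0)"
    by (rule sum.swap)
  also have "\<dots> = (\<Sum>x\<in>X. if simplex_list X adj (k x # ys) then G x else 0)"
    using fin kX by (intro sum.cong refl) (simp add: sum.delta)
  finally show ?thesis unfolding G_def .
qed

lemma face_sum_push_chain:
  assumes fin: "finite X" and kX: "\<And>x. x \<in> X \<Longrightarrow> k x \<in> X"
    and kc: "\<And>x y. x \<in> X \<Longrightarrow> y \<in> X \<Longrightarrow> adj x y \<Longrightarrow> adj_eq adj (k x) (k y)"
    and ac: "alternating c" and sc: "simplex_supported X adj c"
  shows "face_sum X (push_chain X adj k c) ys = push_chain X adj k (face_sum X c) ys"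
proof (cases "simplex_list X adj ys")
  case False
  have "push_chain X adj k c (v # ys) = 0" for v
    using False simplex_list_Cons[of X adj v ys] by (auto simp: push_chain_def)
  thus ?thesis using False by (simp add: face_sum_def push_chain_def)
next
  case True
  define G where "G x = (\<Sum>xs\<in>fibre_lists X k ys. c (x # xs))" for x
  have G0: "G x = 0" if x: "x \<in> X" "k x \<notin> set ys" "\<not> simplex_list X adj (k x # ys)" for x
    unfolding G_def
  proof (rule sum.neutral, rule ballI, rule ccontr)
    fix xs assume xs: "xs \<in> fibre_lists X k ys" "c (x # xs) \<noteq> 0"
    have "distinct (map k (x # xs))" using xs(1) x(2) True by (simp add: fibre_lists_def simplex_list_def)
    moreover have "simplex_list X adj (x # xs)" using sc xs(2) by (simp add: simplex_supported_def)
    ultimately have "simplex_list X adj (map k (x # xs))" using simplex_list_map[where k = k, OF kX kc] by blast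
    thus False using x(3) xs(1) by (simp add: fibre_lists_def)
  qed
  have "G x = (if simplex_list X adj (k x # ys) then G x else 0) + (if k x \<in> set ys then G x else 0)"
    if "x \<in> X" for x
    using G0[OF that] by (cases "k x \<in> set ys") (auto simp: simplex_list_def)
  hence "(\<Sum>x\<in>X. G x) = (\<Sum>x\<in>X. if simplex_list X adj (k x # ys) then G x else 0)
      + (\<Sum>x\<in>{x \<in> X. k x \<in> set ys}. G x)"
    using fin by (simp add: sum.distrib[symmetric] sum.inter_filter cong: sum.cong)
  also have "(\<Sum>x\<in>{x \<in> X. k x \<in> set ys}. G x) = 0"
    unfolding G_def by (rule sum_fibre_lists_repeated_zero[OF fin ac])
  also have "push_chain X adj k (face_sum X c) ys = (\<Sum>x\<in>X. G x)"
    unfolding push_chain_def face_sum_def G_def using True by (simp add: sum.swap[of _ X])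
  ultimately show ?thesis
    using face_sum_push_chain_simplex[OF fin kX, where adj = adj and c = c and ys = ys] unfolding G_def by simp
qed

lemma fun_subspace_chains: "fun_subspace (chains X adj q)"
proof -
  have add: "(\<lambda>t. x t + y t) \<in> chains X adj q" if x: "x \<in> chains X adj q" and y: "y \<in> chains X adj q" for x y
  proof -
    have sup: "ordered_simplex X adj xs \<and> length xs = Suc q" if "x xs + y xs \<noteq> 0" for xs
    proof -
      have "x xs \<noteq> 0 \<or> y xs \<noteq> 0" using that by auto
      thus ?thesis using x y unfolding chains_def by blast
    qed
    have alternation: "x (permute_list p xs) + y (permute_list p xs) = of_int (sign p) * (x xs + y xs)"
      if "p permutes {..<length xs}" for xs p
      using x y that unfolding chains_def by (simp add: distrib_left)
    show ?thesis unfolding chains_def using sup alternation by blast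
  qed
  have scale: "(\<lambda>t. r * x t) \<in> chains X adj q" if x: "x \<in> chains X adj q" for x r
  proof -
    have sup: "ordered_simplex X adj xs \<and> length xs = Suc q" if "r * x xs \<noteq> 0" for xs
    proof -
      have "x xs \<noteq> 0" using that by auto
      thus ?thesis using x unfolding chains_def by blast
    qed
    have alternation: "r * x (permute_list p xs) = of_int (sign p) * (r * x xs)"
      if "p permutes {..<length xs}" for xs p
      using x that unfolding chains_def by simp
    show ?thesis unfolding chains_def using sup alternation by blast
  qed
  have zero: "(\<lambda>_. 0) \<in> chains X adj q" unfolding chains_def by simp
  show ?thesis unfolding fun_subspace_def using add scale zero by blast
qed

lemma fun_linear_boundary: "fun_linear (boundary X adj)"
  unfolding fun_linear_def
proof (intro conjI allI)
  fix x y :: "'a list \<Rightarrow> rat"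
  show "boundary X adj (\<lambda>t. x t + y t) = (\<lambda>t. boundary X adj x t + boundary X adj y t)"
    by (rule ext) (simp add: boundary_def sum.distrib)
next
  fix r and x :: "'a list \<Rightarrow> rat"
  show "boundary X adj (\<lambda>t. r * x t) = (\<lambda>t. r * boundary X adj x t)"
    by (rule ext) (simp add: boundary_def sum_distrib_left)
qed

lemma fun_linear_chain_map: "fun_linear (chain_map X adj k)"
  unfolding fun_linear_def
proof (intro conjI allI)
  fix x y :: "'a list \<Rightarrow> rat"
  show "chain_map X adj k (\<lambda>t. x t + y t) = (\<lambda>t. chain_map X adj k x t + chain_map X adj k y t)"
    by (rule ext) (simp add: chain_map_def sum.distrib)
next
  fix r and x :: "'a list \<Rightarrow> rat"
  show "chain_map X adj k (\<lambda>t. r * x t) = (\<lambda>t. r * chain_map X adj k x t)"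
    by (rule ext) (simp add: chain_map_def sum_distrib_left)
qed

lemma fun_subspace_cycles: "fun_subspace (cycles X adj q)"
  unfolding cycles_def by (rule fun_subspace_kernel[OF fun_subspace_chains fun_linear_boundary])

lemma fun_subspace_boundaries: "fun_subspace (boundaries X adj q)"
  unfolding boundaries_def by (rule fun_subspace_image[OF fun_subspace_chains fun_linear_boundary])

lemma chainsD:
  assumes "c \<in> chains X adj q"
  shows "simplex_supported X adj c" "c [] = 0" "alternating c" "\<And>xs. c xs \<noteq> 0 \<Longrightarrow> ordered_simplex X adj xs \<and> length xs = Suc q"
proof -
  have h: "c xs \<noteq> 0 \<Longrightarrow> ordered_simplex X adj xs \<and> length xs = Suc q" for xs using assms by (simp add: chains_iff)
  show "\<And>xs. c xs \<noteq> 0 \<Longrightarrow> ordered_simplex X adj xs \<and> length xs = Suc q" by (rule h)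
  show "simplex_supported X adj c" unfolding simplex_supported_def using h by (auto simp: ordered_simplex_iff_simplex_list)
  show "c [] = 0" using h[of "[]"] by (auto simp: ordered_simplex_def)
  show "alternating c" using assms by (simp add: chains_iff)
qed

lemma boundary_eq_face_sum_chains:
  assumes "c \<in> chains X adj (Suc q)"
  shows "boundary X adj c = face_sum X c"
proof
  fix ys
  have "c [v] = 0" for v using chainsD(4)[OF assms, of "[v]"] by auto
  hence "face_sum X c [] = 0" by (simp add: face_sum_def)
  thus "boundary X adj c ys = face_sum X c ys" using boundary_eq_face_sum[OF chainsD(1)[OF assms]] by simp
qed

lemma boundary_chains:
  assumes c: "c \<in> chains X adj (Suc q)"
  shows "boundary X adj c \<in> chains X adj q"
proof -
  have s: "ordered_simplex X adj ys \<and> length ys = Suc q" if nz: "boundary X adj c ys \<noteq> 0" for ys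
  proof -
    have os: "ordered_simplex X adj ys" using nz by (auto simp: boundary_def split: if_splits)
    have "(\<Sum>v\<in>X. c (v # ys)) \<noteq> 0" using nz by (auto simp: boundary_def split: if_splits)
    then obtain v where "v \<in> X" "c (v # ys) \<noteq> 0" by (rule sum.not_neutral_contains_not_neutral)
    hence "length (v # ys) = Suc (Suc q)" using chainsD(4)[OF c] by blast
    thus ?thesis using os by simp
  qed
  have a: "alternating (boundary X adj c)"
    unfolding alternating_def
  proof (intro allI impI)
    fix ys :: "'a list" and p assume p: "p permutes {..<length ys}"
    have pe: "permute_list p ys = [] \<longleftrightarrow> ys = []" by (metis length_permute_list length_0_conv)
    have osp: "ordered_simplex X adj (permute_list p ys) \<longleftrightarrow> ordered_simplex X adj ys"
      using simplex_list_permute[OF p] pe by (simp add: ordered_simplex_iff_simplex_list)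
    have "c (v # permute_list p ys) = of_int (sign p) * c (v # ys)" for v
      using alternatingD[OF alternating_Cons[OF chainsD(3)[OF c]] p] by simp
    thus "boundary X adj c (permute_list p ys) = of_int (sign p) * boundary X adj c ys"
      unfolding boundary_def osp by (simp add: sum_distrib_left)
  qed
  show ?thesis unfolding chains_iff using s a by blast
qed

lemma boundary_chains_0:
  assumes "c \<in> chains X adj 0"
  shows "boundary X adj c = (\<lambda>_. 0)"
proof
  fix ys
  have "c (v # ys) = 0" if "ys \<noteq> []" for v using chainsD(4)[OF assms, of "v # ys"] that by auto
  thus "boundary X adj c ys = 0" by (auto simp: boundary_def ordered_simplex_def)
qed

lemma boundary_boundary:
  assumes fin: "finite X" and c: "c \<in> chains X adj q"
  shows "boundary X adj (boundary X adj c) = (\<lambda>_. 0)"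
proof
  fix ys
  have bc: "boundary X adj c = (\<lambda>ys. if ys = [] then 0 else face_sum X c ys)" by (rule boundary_eq_face_sum[OF chainsD(1)[OF c]])
  have ac: "alternating c" by (rule chainsD(3)[OF c])
  have "(\<Sum>v\<in>X. \<Sum>w\<in>X. c (w # v # ys)) = (\<Sum>w\<in>X. \<Sum>v\<in>X. c (w # v # ys))" by (rule sum.swap)
  also have "\<dots> = (\<Sum>w\<in>X. \<Sum>v\<in>X. - c (v # w # ys))" by (intro sum.cong refl) (rule alternating_swap_heads[OF ac])
  finally have "(\<Sum>v\<in>X. \<Sum>w\<in>X. c (w # v # ys)) = - (\<Sum>v\<in>X. \<Sum>w\<in>X. c (w # v # ys))"
    by (simp add: sum_negf)
  hence z: "(\<Sum>v\<in>X. \<Sum>w\<in>X. c (w # v # ys)) = 0" by simp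
  have "boundary X adj (boundary X adj c) ys = (if ordered_simplex X adj ys then \<Sum>v\<in>X. boundary X adj c (v # ys) else 0)"
    by (simp add: boundary_def)
  also have "\<dots> = (if ordered_simplex X adj ys then \<Sum>v\<in>X. \<Sum>w\<in>X. c (w # v # ys) else 0)"
    using bc by (simp add: face_sum_def)
  finally show "boundary X adj (boundary X adj c) ys = 0" using z by simp
qed

lemma chain_map_chains:
  assumes fin: "finite X" and c: "c \<in> chains X adj q"
  shows "chain_map X adj h c \<in> chains X adj q"
proof -
  have eq: "chain_map X adj h c = push_chain X adj h c" by (rule chain_map_eq_push_chain[where c=c, OF chainsD(2)[OF c]])
  have a: "alternating (push_chain X adj h c)" by (rule alternating_push_chain[OF chainsD(3)[OF c]])
  have s: "ordered_simplex X adj ys \<and> length ys = Suc q" if "push_chain X adj h c ys \<noteq> 0" for ys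
  proof -
    have sy: "simplex_list X adj ys" using that by (auto simp: push_chain_def split: if_splits)
    have "(\<Sum>xs\<in>fibre_lists X h ys. c xs) \<noteq> 0" using that by (auto simp: push_chain_def split: if_splits)
    then obtain xs where xs: "xs \<in> fibre_lists X h ys" "c xs \<noteq> 0" by (rule sum.not_neutral_contains_not_neutral)
    have "length xs = Suc q" using chainsD(4)[OF c xs(2)] by simp
    moreover have "map h xs = ys" using xs(1) by (simp add: fibre_lists_def)
    ultimately have "length ys = Suc q" by auto
    thus ?thesis using sy by (auto simp: ordered_simplex_iff_simplex_list)
  qed
  show ?thesis unfolding eq chains_iff using a s by blast
qed

lemma chain_map_boundary:
  assumes fin: "finite X" and hX: "\<And>x. x \<in> X \<Longrightarrow> h x \<in> X"
    and hc: "\<And>x y. x \<in> X \<Longrightarrow> y \<in> X \<Longrightarrow> adj x y \<Longrightarrow> adj_eq adj (h x) (h y)"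
    and c: "c \<in> chains X adj (Suc q)"
  shows "chain_map X adj h (boundary X adj c) = boundary X adj (chain_map X adj h c)"
proof -
  have bcq: "boundary X adj c \<in> chains X adj q" by (rule boundary_chains[OF c])
  have hcq: "chain_map X adj h c \<in> chains X adj (Suc q)" by (rule chain_map_chains[OF fin c])
  have "chain_map X adj h (boundary X adj c) = push_chain X adj h (face_sum X c)"
    using chain_map_eq_push_chain[where c="boundary X adj c", OF chainsD(2)[OF bcq]] boundary_eq_face_sum_chains[OF c] by simp
  also have "\<dots> = face_sum X (push_chain X adj h c)"
    using face_sum_push_chain[OF fin hX hc chainsD(3)[OF c] chainsD(1)[OF c]] by (intro ext) simp
  also have "\<dots> = boundary X adj (chain_map X adj h c)"
    using boundary_eq_face_sum_chains[OF hcq] chain_map_eq_push_chain[where c=c, OF chainsD(2)[OF c]] by simp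
  finally show ?thesis .
qed


lemma chains_support: "c \<in> chains X adj q \<Longrightarrow> c y \<noteq> 0 \<Longrightarrow> y \<in> {xs. set xs \<subseteq> X \<and> length xs = Suc q}"
  using chainsD(4)[of c X adj q y] by (auto simp: ordered_simplex_def)

lemma finite_lists_Suc: "finite X \<Longrightarrow> finite {xs. set xs \<subseteq> X \<and> length xs = Suc q}"
  by (rule finite_lists_length_eq)

lemma cycles_subset_chains: "cycles X adj q \<subseteq> chains X adj q" by (auto simp: cycles_def)

lemma boundaries_subset_cycles:
  assumes "finite X" shows "boundaries X adj q \<subseteq> cycles X adj q"
proof
  fix b assume "b \<in> boundaries X adj q"
  then obtain c where c: "c \<in> chains X adj (Suc q)" "b = boundary X adj c" by (auto simp: boundaries_def)
  thus "b \<in> cycles X adj q" using boundary_chains[OF c(1)] boundary_boundary[OF assms c(1)] by (simp add: cycles_def)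
qed

lemma zero_space_subset_boundaries: "zero_space \<subseteq> boundaries X adj q"
  using fun_subspace_zero[OF fun_subspace_boundaries] by (auto simp: zero_space_def)

lemma chain_map_invariant:
  assumes fin: "finite X" and hc: "dcontinuous X adj h"
  shows "chain_map X adj h ` chains X adj q \<subseteq> chains X adj q"
    "chain_map X adj h ` cycles X adj q \<subseteq> cycles X adj q"
    "chain_map X adj h ` boundaries X adj q \<subseteq> boundaries X adj q"
    "chain_map X adj h ` zero_space \<subseteq> zero_space"
proof -
  have hX: "\<And>x. x \<in> X \<Longrightarrow> h x \<in> X" and hcc: "\<And>x y. x \<in> X \<Longrightarrow> y \<in> X \<Longrightarrow> adj x y \<Longrightarrow> adj_eq adj (h x) (h y)"
    using hc by (auto simp: dcontinuous_def)
  show 1: "chain_map X adj h ` chains X adj q \<subseteq> chains X adj q" using chain_map_chains[OF fin] by blast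
  show "chain_map X adj h ` cycles X adj q \<subseteq> cycles X adj q"
  proof
    fix y assume "y \<in> chain_map X adj h ` cycles X adj q"
    then obtain z where z: "z \<in> cycles X adj q" "y = chain_map X adj h z" by blast
    have zc: "z \<in> chains X adj q" and bz: "boundary X adj z = (\<lambda>_. 0)" using z by (auto simp: cycles_def)
    have yc: "y \<in> chains X adj q" using chain_map_chains[OF fin zc] z by simp
    have "boundary X adj y = (\<lambda>_. 0)"
    proof (cases q)
      case 0 thus ?thesis using boundary_chains_0 yc by simp
    next
      case (Suc q')
      have "boundary X adj y = chain_map X adj h (boundary X adj z)"
        using chain_map_boundary[OF fin hX hcc, where c=z and q=q'] zc Suc z by simp
      thus ?thesis using bz fun_linear_zero[OF fun_linear_chain_map] by simp
    qed
    thus "y \<in> cycles X adj q" using yc by (simp add: cycles_def)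
  qed
  show "chain_map X adj h ` boundaries X adj q \<subseteq> boundaries X adj q"
  proof
    fix y assume "y \<in> chain_map X adj h ` boundaries X adj q"
    then obtain c where c: "c \<in> chains X adj (Suc q)" "y = chain_map X adj h (boundary X adj c)"
      by (auto simp: boundaries_def)
    have "y = boundary X adj (chain_map X adj h c)" using chain_map_boundary[OF fin hX hcc c(1)] c by simp
    moreover have "chain_map X adj h c \<in> chains X adj (Suc q)" by (rule chain_map_chains[OF fin c(1)])
    ultimately show "y \<in> boundaries X adj q" by (auto simp: boundaries_def)
  qed
  show "chain_map X adj h ` zero_space \<subseteq> zero_space" using fun_linear_zero[OF fun_linear_chain_map] by (auto simp: zero_space_def)
qed

section \<open>Cones and invariance under strong homotopy\<close>

text \<open>The cone \<open>a * f\<close> gives the oriented simplex \<open>(a, y\<^sub>1, \<dots>, y\<^sub>q)\<close> the coefficient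
\<open>f (y\<^sub>1, \<dots>, y\<^sub>q)\<close>; the sign \<open>(-1) ^ list_index a u\<close> moves \<open>a\<close> to the front.\<close>

definition cone :: "'a set \<Rightarrow> ('a \<Rightarrow> 'a \<Rightarrow> bool) \<Rightarrow> 'a \<Rightarrow> ('a list \<Rightarrow> rat) \<Rightarrow> 'a list \<Rightarrow> rat" where
  "cone X adj a f u = (if simplex_list X adj u \<and> a \<in> set u then (-1) ^ list_index a u * f (remove1 a u) else 0)"

definition cone_admissible :: "'a set \<Rightarrow> ('a \<Rightarrow> 'a \<Rightarrow> bool) \<Rightarrow> 'a \<Rightarrow> ('a list \<Rightarrow> rat) \<Rightarrow> bool" where
  "cone_admissible X adj a f \<longleftrightarrow> a \<in> X \<and> (\<forall>ys. f ys \<noteq> 0 \<longrightarrow> simplex_list X adj ys \<and>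
      (a \<notin> set ys \<longrightarrow> (\<forall>y\<in>set ys. adj a y \<and> adj y a)))"

lemma alternating_cone:
  assumes "alternating f" shows "alternating (cone X adj a f)"
  unfolding alternating_def
proof (intro allI impI)
  fix u :: "'a list" and q assume q: "q permutes {..<length u}"
  show "cone X adj a f (permute_list q u) = of_int (sign q) * cone X adj a f u"
  proof (cases "simplex_list X adj u \<and> a \<in> set u")
    case True
    hence du: "distinct u" by (simp add: simplex_list_def)
    have "simplex_list X adj (permute_list q u) \<and> a \<in> set (permute_list q u)" using True q simplex_list_permute by auto
    thus ?thesis using True cone_coeff_permute[OF assms du _ q, of a] unfolding cone_def by simp
  next
    case False
    hence neg: "\<not> (simplex_list X adj (permute_list q u) \<and> a \<in> set (permute_list q u))" using q simplex_list_permute by auto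
    show ?thesis unfolding cone_def by (subst if_not_P[OF neg], subst if_not_P[OF False]) simp
  qed
qed

lemma simplex_supported_cone: "simplex_supported X adj (cone X adj a f)"
  unfolding simplex_supported_def cone_def by auto

lemma simplex_list_remove1:
  assumes "simplex_list X adj u" shows "simplex_list X adj (remove1 a u)"
proof -
  have s: "set (remove1 a u) \<subseteq> set u" by (rule set_remove1_subset)
  show ?thesis using assms s unfolding simplex_list_def by (simp add: distinct_remove1) blast
qed

lemma simplex_list_ConsI:
  "simplex_list X adj ys \<Longrightarrow> a \<in> X \<Longrightarrow> a \<notin> set ys \<Longrightarrow> (\<forall>y\<in>set ys. adj a y \<and> adj y a) \<Longrightarrow> simplex_list X adj (a # ys)"
  unfolding simplex_list_def by auto

lemma cone_Cons_notin:
  "a \<notin> set ys \<Longrightarrow> cone X adj a f (v # ys) = (if v = a then (if simplex_list X adj (a # ys) then f ys else 0) else 0)"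
  by (cases "v = a") (simp_all add: cone_def)

lemma cone_Cons_in:
  assumes "a \<in> set ys"
  shows "cone X adj a f (v # ys) = (if v \<noteq> a \<and> simplex_list X adj (v # ys) then - ((-1) ^ list_index a ys) * f (v # remove1 a ys) else 0)"
proof (cases "v = a")
  case True
  hence "\<not> simplex_list X adj (v # ys)" using assms by (simp add: simplex_list_def)
  thus ?thesis using True by (simp add: cone_def)
next
  case False thus ?thesis using assms by (simp add: cone_def)
qed

lemma simplex_list_set_eq:
  "simplex_list X adj ys \<Longrightarrow> distinct xs \<Longrightarrow> set xs = set ys \<Longrightarrow> simplex_list X adj xs"
  unfolding simplex_list_def by simp

lemma simplex_list_Cons_cone:
  assumes adm: "cone_admissible X adj a f" and ys: "simplex_list X adj ys" and a: "a \<in> set ys"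
    and v: "v \<noteq> a" "f (v # remove1 a ys) \<noteq> 0"
  shows "simplex_list X adj (v # ys)"
proof -
  let ?r = "remove1 a ys"
  have svr: "simplex_list X adj (v # ?r)" using adm v(2) by (simp add: cone_admissible_def)
  have aX: "a \<in> X" using adm by (simp add: cone_admissible_def)
  have a': "a \<notin> set (v # ?r)" using v(1) ys by (simp add: simplex_list_def)
  hence "\<forall>y\<in>set (v # ?r). adj a y \<and> adj y a" using adm v(2) unfolding cone_admissible_def by blast
  hence "simplex_list X adj (a # v # ?r)" by (rule simplex_list_ConsI[OF svr aX a'])
  moreover have "set (v # ys) = set (a # v # ?r)" using a ys by (auto simp: simplex_list_def)
  moreover have "distinct (v # ys)" using svr v(1) ys by (auto simp: simplex_list_def)
  ultimately show ?thesis using simplex_list_set_eq by metis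
qed

lemma face_sum_cone_notin:
  assumes fin: "finite X" and adm: "cone_admissible X adj a f" and a: "a \<notin> set ys"
  shows "face_sum X (cone X adj a f) ys = f ys"
proof -
  have aX: "a \<in> X" using adm by (simp add: cone_admissible_def)
  have "face_sum X (cone X adj a f) ys
      = (\<Sum>v\<in>X. if v = a then (if simplex_list X adj (a # ys) then f ys else 0) else 0)"
    unfolding face_sum_def cone_Cons_notin[OF a] ..
  also have "\<dots> = (if simplex_list X adj (a # ys) then f ys else 0)"
    using sum.delta[OF fin, of a "\<lambda>_. if simplex_list X adj (a # ys) then f ys else 0"] aX by simp
  also have "\<dots> = f ys"
    using adm a aX by (auto simp: cone_admissible_def intro: simplex_list_ConsI)
  finally show ?thesis .
qed

lemma face_sum_cone_in:
  assumes fin: "finite X" and af: "alternating f" and adm: "cone_admissible X adj a f"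
    and ys: "simplex_list X adj ys" and a: "a \<in> set ys"
  shows "face_sum X (cone X adj a f) ys = f ys - cone X adj a (face_sum X f) ys"
proof -
  let ?i = "list_index a ys" and ?r = "remove1 a ys"
  have aX: "a \<in> X" using adm by (simp add: cone_admissible_def)
  have "cone X adj a f (v # ys) = - ((-1) ^ ?i) * f (v # ?r)" if "v \<in> X - {a}" for v
  proof (cases "f (v # ?r) = 0")
    case True thus ?thesis using cone_Cons_in[OF a] by simp
  next
    case False thus ?thesis using cone_Cons_in[OF a] simplex_list_Cons_cone[OF adm ys a] that by simp
  qed
  moreover have "cone X adj a f (a # ys) = 0" using cone_Cons_in[OF a] by simp
  ultimately have L: "face_sum X (cone X adj a f) ys = - ((-1) ^ ?i) * (\<Sum>v\<in>X - {a}. f (v # ?r))"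
    unfolding face_sum_def sum.remove[OF fin aX] by (simp add: sum_distrib_left)
  have "cone X adj a (face_sum X f) ys = (-1) ^ ?i * face_sum X f ?r"
    unfolding cone_def using ys a by simp
  also have "\<dots> = (-1) ^ ?i * (f (a # ?r) + (\<Sum>v\<in>X - {a}. f (v # ?r)))"
    unfolding face_sum_def sum.remove[OF fin aX] ..
  also have "f (a # ?r) = (-1) ^ ?i * f ys" by (rule alternating_move_to_front[OF af a])
  finally show ?thesis
    unfolding L by (simp add: algebra_simps flip: power_add mult_2)
qed

lemma face_sum_cone:
  assumes fin: "finite X" and af: "alternating f" and adm: "cone_admissible X adj a f"
  shows "face_sum X (cone X adj a f) ys = f ys - cone X adj a (face_sum X f) ys"
proof (cases "simplex_list X adj ys")
  case False
  have "cone X adj a f (v # ys) = 0" for v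
    using False simplex_list_Cons[of X adj v ys] by (auto simp: cone_def)
  moreover have "f ys = 0" using False adm by (auto simp: cone_admissible_def)
  ultimately show ?thesis using False by (simp add: face_sum_def cone_def)
next
  case True
  thus ?thesis
    using face_sum_cone_notin[OF fin adm] face_sum_cone_in[OF fin af adm True]
    by (cases "a \<in> set ys") (auto simp: cone_def)
qed


lemma remove1_eq_take_drop: "a \<in> set u \<Longrightarrow> remove1 a u = take (list_index a u) u @ drop (Suc (list_index a u)) u"
  by (induction u) auto

lemma nth_remove1_less:
  assumes "a \<in> set u" "i < list_index a u"
  shows "remove1 a u ! i = u ! i"
proof -
  have "list_index a u < length u" using list_index_less[OF assms(1)] .
  thus ?thesis using assms by (simp add: remove1_eq_take_drop[OF assms(1)] nth_append)
qed

lemma sum_partition: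
  assumes "finite A"
  shows "sum F A = sum F {x \<in> A. \<not> P x} + sum F {x \<in> A. P x}"
proof -
  have "A = {x \<in> A. \<not> P x} \<union> {x \<in> A. P x}" by auto
  hence "sum F A = sum F ({x \<in> A. \<not> P x} \<union> {x \<in> A. P x})" by simp
  also have "\<dots> = sum F {x \<in> A. \<not> P x} + sum F {x \<in> A. P x}"
    by (rule sum.union_disjoint) (use assms in auto)
  finally show ?thesis .
qed

lemma alternating_insert:
  assumes "alternating z" "p \<notin> set (take j xs)" "j \<le> length xs"
  shows "z (take j xs @ p # drop j xs) = (-1) ^ j * z (p # xs)"
proof -
  have "list_index p (take j xs @ p # drop j xs) = j" "remove1 p (take j xs @ p # drop j xs) = xs"
    using list_index_insert[OF assms(2,3)] by auto
  hence "z (p # xs) = (-1) ^ j * z (take j xs @ p # drop j xs)"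
    using alternating_move_to_front[OF assms(1), of p "take j xs @ p # drop j xs"] by simp
  thus ?thesis by (simp flip: power_add mult_2)
qed

lemma inj_on_insert_nth: "inj_on (\<lambda>xs. take j xs @ p # drop j xs) {xs. j \<le> length xs}"
proof
  fix x y assume x: "x \<in> {xs. j \<le> length xs}" and y: "y \<in> {xs. j \<le> length xs}"
    and e: "take j x @ p # drop j x = take j y @ p # drop j y"
  have "take j x = take j (take j x @ p # drop j x)" "drop j x = drop (Suc j) (take j x @ p # drop j x)"
    using x by (simp_all add: min_def)
  moreover have "take j y = take j (take j y @ p # drop j y)" "drop j y = drop (Suc j) (take j y @ p # drop j y)"
    using y by (simp_all add: min_def)
  ultimately have "take j x = take j y" "drop j x = drop j y" using e by simp_all
  thus "x = y" by (metis append_take_drop_id)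
qed

context
  fixes X :: "'a set" and k :: "'a \<Rightarrow> 'a" and ys :: "'a list" and p :: 'a
  assumes dys: "distinct ys" and aY: "k p \<in> set ys"
begin

lemma fibre_lists_remove1_insert_pos:
  assumes xs: "xs \<in> fibre_lists X k (remove1 (k p) ys)"
  shows "p \<notin> set (take (list_index (k p) ys) xs)" "list_index (k p) ys \<le> length xs"
proof -
  let ?j = "list_index (k p) ys"
  have jl: "?j < length ys" by (rule list_index_less[OF aY])
  have mk: "map k xs = remove1 (k p) ys" using xs by (simp add: fibre_lists_def)
  hence "length (map k xs) = length (remove1 (k p) ys)" by (rule arg_cong)
  hence "length xs = length ys - 1" using aY by (simp add: length_remove1)
  thus "?j \<le> length xs" using jl by simp
  show "p \<notin> set (take ?j xs)"
  proof
    assume "p \<in> set (take ?j xs)"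
    then obtain i where i: "i < ?j" "i < length xs" "xs ! i = p" by (auto simp: in_set_conv_nth)
    hence "k p = map k xs ! i" by simp
    also have "\<dots> = remove1 (k p) ys ! i" using mk by simp
    also have "\<dots> = ys ! i" by (rule nth_remove1_less[OF aY i(1)])
    finally have "ys ! i = ys ! ?j" using nth_list_index[OF aY] by simp
    moreover have "i < length ys" using i(1) jl by simp
    ultimately have "i = ?j" using nth_eq_iff_index_eq[OF dys _ jl] by blast
    thus False using i(1) by simp
  qed
qed

lemma fibre_lists_insert_image:
  assumes pX: "p \<in> X"
  shows "(\<lambda>xs. take (list_index (k p) ys) xs @ p # drop (list_index (k p) ys) xs)
      ` fibre_lists X k (remove1 (k p) ys) = {xs \<in> fibre_lists X k ys. p \<in> set xs}"
    (is "?ins ` ?R = ?S")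
proof
  let ?j = "list_index (k p) ys"
  show "?ins ` ?R \<subseteq> ?S"
  proof
    fix xs assume "xs \<in> ?ins ` ?R"
    then obtain xs' where xs': "xs' \<in> ?R" "xs = ?ins xs'" by blast
    have "map k xs = take ?j (remove1 (k p) ys) @ k p # drop ?j (remove1 (k p) ys)"
      using xs' by (simp add: fibre_lists_def take_map[symmetric] drop_map[symmetric])
    also have "\<dots> = ys" by (rule take_remove1_list_index[OF aY])
    finally show "xs \<in> ?S" using xs' pX by (auto simp: fibre_lists_def dest: in_set_takeD in_set_dropD)
  qed
  show "?S \<subseteq> ?ins ` ?R"
  proof
    fix xs assume "xs \<in> ?S"
    hence pxs: "p \<in> set xs" and mk: "map k xs = ys" and sX: "set xs \<subseteq> X" by (auto simp: fibre_lists_def)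
    define i where "i = list_index p xs"
    have il: "i < length xs" unfolding i_def by (rule list_index_less[OF pxs])
    have "ys ! i = k (xs ! i)" using mk il by auto
    also have "xs ! i = p" unfolding i_def by (rule nth_list_index[OF pxs])
    finally have ji: "?j = i" using list_index_nth[OF dys, of i] il mk by auto
    have "xs = ?ins (remove1 p xs)" unfolding ji i_def by (rule take_remove1_list_index[OF pxs, symmetric])
    moreover have "map k (remove1 p xs) = remove1 (k p) ys"
    proof -
      have "map k (remove1 p xs) = take i (map k xs) @ drop (Suc i) (map k xs)"
        unfolding i_def remove1_eq_take_drop[OF pxs] by (simp add: take_map drop_map)
      also have "\<dots> = remove1 (k p) ys" using mk ji remove1_eq_take_drop[OF aY] by simp
      finally show ?thesis .
    qed
    hence "remove1 p xs \<in> ?R" using sX by (auto simp: fibre_lists_def dest: set_remove1_subset[THEN subsetD])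
    ultimately show "xs \<in> ?ins ` ?R" by blast
  qed
qed

end

abbreviation link :: "'a \<Rightarrow> ('a list \<Rightarrow> rat) \<Rightarrow> 'a list \<Rightarrow> rat" where
  "link p z \<equiv> \<lambda>ys. z (p # ys)"

lemma sum_fibre_lists_containing:
  assumes pX: "p \<in> X" and ys: "simplex_list X adj ys" and az: "alternating z"
  shows "(\<Sum>xs\<in>{xs \<in> fibre_lists X k ys. p \<in> set xs}. z xs)
    = cone X adj (k p) (push_chain X adj k (link p z)) ys"
proof (cases "k p \<in> set ys")
  case False
  hence empty: "{xs \<in> fibre_lists X k ys. p \<in> set xs} = {}" by (auto simp: fibre_lists_def)
  show ?thesis unfolding empty using False by (simp add: cone_def)
next
  case aY: True
  let ?j = "list_index (k p) ys" and ?r = "remove1 (k p) ys"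
  let ?ins = "\<lambda>xs. take ?j xs @ p # drop ?j xs"
  have dys: "distinct ys" using ys by (simp add: simplex_list_def)
  note pos = fibre_lists_remove1_insert_pos[where k = k and p = p, OF dys aY]
  have "inj_on ?ins (fibre_lists X k ?r)"
    using pos(2) by (intro inj_on_subset[OF inj_on_insert_nth]) auto
  hence "(\<Sum>xs\<in>{xs \<in> fibre_lists X k ys. p \<in> set xs}. z xs) = (\<Sum>xs\<in>fibre_lists X k ?r. z (?ins xs))"
    unfolding fibre_lists_insert_image[where k = k and p = p, OF dys aY pX, symmetric] by (rule sum.reindex[unfolded o_def])
  also have "\<dots> = (\<Sum>xs\<in>fibre_lists X k ?r. (-1) ^ ?j * z (p # xs))"
    using alternating_insert[OF az pos] by simp
  also have "\<dots> = (-1) ^ ?j * push_chain X adj k (link p z) ?r"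
    using simplex_list_remove1[OF ys] by (simp add: push_chain_def sum_distrib_left)
  also have "\<dots> = cone X adj (k p) (push_chain X adj k (link p z)) ys"
    using ys aY unfolding cone_def by simp
  finally show ?thesis .
qed

lemma push_chain_split:
  assumes fin: "finite X" and pX: "p \<in> X" and az: "alternating z"
  shows "push_chain X adj k z ys = (if simplex_list X adj ys
        then (\<Sum>xs\<in>{xs \<in> fibre_lists X k ys. p \<notin> set xs}. z xs) else 0)
      + cone X adj (k p) (push_chain X adj k (link p z)) ys"
proof (cases "simplex_list X adj ys")
  case False thus ?thesis by (simp add: push_chain_def cone_def)
next
  case True
  have "(\<Sum>xs\<in>fibre_lists X k ys. z xs) = (\<Sum>xs\<in>{xs \<in> fibre_lists X k ys. p \<notin> set xs}. z xs)
      + (\<Sum>xs\<in>{xs \<in> fibre_lists X k ys. p \<in> set xs}. z xs)"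
    using sum_partition[OF finite_fibre_lists[OF fin], of z] by simp
  thus ?thesis using True sum_fibre_lists_containing[OF pX True az] by (simp add: push_chain_def)
qed

lemma fibre_lists_avoiding_cong:
  assumes "\<And>x. x \<in> X \<Longrightarrow> x \<noteq> p \<Longrightarrow> k' x = k x"
  shows "{xs \<in> fibre_lists X k' ys. p \<notin> set xs} = {xs \<in> fibre_lists X k ys. p \<notin> set xs}"
proof -
  have "map k' xs = map k xs" if "set xs \<subseteq> X" "p \<notin> set xs" for xs
    using that assms by (intro map_cong) auto
  thus ?thesis unfolding fibre_lists_def by auto
qed

lemma push_chain_link_cong:
  assumes fin: "finite X" and sz: "simplex_supported X adj z"
    and agree: "\<And>x. x \<in> X \<Longrightarrow> x \<noteq> p \<Longrightarrow> k' x = k x"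
  shows "push_chain X adj k' (link p z) = push_chain X adj k (link p z)"
proof
  fix ys
  have "z (p # xs) = 0" if "p \<in> set xs" for xs
    using sz that unfolding simplex_supported_def simplex_list_def by auto
  hence link_sum: "(\<Sum>xs\<in>fibre_lists X h ys. z (p # xs))
      = (\<Sum>xs\<in>{xs \<in> fibre_lists X h ys. p \<notin> set xs}. z (p # xs))" for h
    using sum_partition[OF finite_fibre_lists[OF fin], of "link p z" h ys "\<lambda>xs. p \<in> set xs"] by simp
  show "push_chain X adj k' (link p z) ys = push_chain X adj k (link p z) ys"
    using fibre_lists_avoiding_cong[OF agree, where ys = ys] by (simp add: push_chain_def link_sum)
qed

text \<open>Moving a map \<open>k\<close> to \<open>k'\<close> at the single point \<open>p\<close>, where \<open>k' p\<close> is adjacent to \<open>k\<close> of the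
closed star of \<open>p\<close>: on a cycle \<open>z\<close> the difference of the push-forwards is the boundary of the
double cone \<open>k p * (k' p * e)\<close>, where \<open>e\<close> is the push-forward of the link of \<open>p\<close> in \<open>z\<close>.\<close>

locale point_change =
  fixes X :: "'a set" and adj :: "'a \<Rightarrow> 'a \<Rightarrow> bool" and k k' :: "'a \<Rightarrow> 'a" and p :: 'a
    and z :: "'a list \<Rightarrow> rat"
  assumes fin: "finite X" and pX: "p \<in> X"
    and kX: "\<And>x. x \<in> X \<Longrightarrow> k x \<in> X" and k'X: "\<And>x. x \<in> X \<Longrightarrow> k' x \<in> X"
    and kc: "\<And>x y. x \<in> X \<Longrightarrow> y \<in> X \<Longrightarrow> adj x y \<Longrightarrow> adj_eq adj (k x) (k y)"
    and agree: "\<And>x. x \<in> X \<Longrightarrow> x \<noteq> p \<Longrightarrow> k' x = k x"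
    and moved: "adj_eq adj (k p) (k' p)" "adj_eq adj (k' p) (k p)"
    and star: "\<And>x. x \<in> X \<Longrightarrow> adj p x \<Longrightarrow> adj_eq adj (k' p) (k x) \<and> adj_eq adj (k x) (k' p)"
    and az: "alternating z" and sz: "simplex_supported X adj z"
    and cycle: "\<And>ys. face_sum X z (p # ys) = 0"
begin

lemma push_chain_link_nonzero:
  assumes "push_chain X adj k (link p z) ys \<noteq> 0"
  shows "simplex_list X adj ys" "\<exists>xs. set xs \<subseteq> X \<and> map k xs = ys \<and> z (p # xs) \<noteq> 0"
proof -
  show sy: "simplex_list X adj ys" using assms by (auto simp: push_chain_def split: if_splits)
  hence "(\<Sum>xs\<in>fibre_lists X k ys. z (p # xs)) \<noteq> 0" using assms by (simp add: push_chain_def)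
  then obtain xs where "xs \<in> fibre_lists X k ys" "z (p # xs) \<noteq> 0"
    by (rule sum.not_neutral_contains_not_neutral)
  thus "\<exists>xs. set xs \<subseteq> X \<and> map k xs = ys \<and> z (p # xs) \<noteq> 0" by (auto simp: fibre_lists_def)
qed

lemma push_chain_link_vertex:
  assumes "push_chain X adj k (link p z) ys \<noteq> 0" and "y \<in> set ys"
  obtains x where "x \<in> X" "y = k x" "adj p x" "adj x p"
proof -
  obtain xs where xs: "map k xs = ys" "z (p # xs) \<noteq> 0"
    using push_chain_link_nonzero(2)[OF assms(1)] by blast
  have s: "simplex_list X adj (p # xs)" using sz xs(2) by (simp add: simplex_supported_def)
  obtain x where x: "x \<in> set xs" "y = k x" using assms(2) xs(1) by auto
  have "x \<noteq> p" using s x(1) by (auto simp: simplex_list_def)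
  hence "adj p x" "adj x p" "x \<in> X" using s x(1) by (auto simp: simplex_list_def)
  thus ?thesis using that x(2) by blast
qed

lemma cone_admissible_link:
  "cone_admissible X adj (k' p) (push_chain X adj k (link p z))"
  unfolding cone_admissible_def
proof (intro conjI allI impI ballI k'X[OF pX])
  fix ys y assume e: "push_chain X adj k (link p z) ys \<noteq> 0"
  show "simplex_list X adj ys" by (rule push_chain_link_nonzero(1)[OF e])
  assume "k' p \<notin> set ys" "y \<in> set ys"
  hence ne: "k' p \<noteq> y" by blast
  obtain x where x: "x \<in> X" "y = k x" "adj p x" using push_chain_link_vertex[OF e \<open>y \<in> set ys\<close>] .
  have "adj_eq adj (k' p) y \<and> adj_eq adj y (k' p)" using star[OF x(1,3)] x(2) by simp
  thus "adj (k' p) y" "adj y (k' p)" using ne by (auto simp: adj_eq_def)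
qed

lemma cone_admissible_double_cone:
  "cone_admissible X adj (k p) (cone X adj (k' p) (push_chain X adj k (link p z)))"
  unfolding cone_admissible_def
proof (intro conjI allI impI ballI kX[OF pX])
  fix u y assume cu: "cone X adj (k' p) (push_chain X adj k (link p z)) u \<noteq> 0"
  hence su: "simplex_list X adj u" and bu: "k' p \<in> set u"
    and er: "push_chain X adj k (link p z) (remove1 (k' p) u) \<noteq> 0"
    by (auto simp: cone_def split: if_splits)
  show "simplex_list X adj u" by (rule su)
  assume "k p \<notin> set u" and y: "y \<in> set u"
  hence ne: "k p \<noteq> y" by blast
  have "adj_eq adj (k p) y \<and> adj_eq adj y (k p)"
  proof (cases "y = k' p")
    case True thus ?thesis using moved by simp
  next
    case False
    hence "y \<in> set (remove1 (k' p) u)" using y su by (simp add: simplex_list_def)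
    then obtain x where x: "x \<in> X" "y = k x" "adj p x" "adj x p" by (rule push_chain_link_vertex[OF er])
    thus ?thesis using kc[OF pX x(1) x(3)] kc[OF x(1) pX x(4)] by simp
  qed
  thus "adj (k p) y" "adj y (k p)" using ne by (auto simp: adj_eq_def)
qed

lemma face_sum_push_chain_link: "face_sum X (push_chain X adj k (link p z)) ys = 0"
proof -
  have "face_sum X (link p z) ys = - face_sum X z (p # ys)" for ys
  proof -
    have "face_sum X (link p z) ys = (\<Sum>v\<in>X. - z (v # p # ys))"
      unfolding face_sum_def by (intro sum.cong refl) (rule alternating_swap_heads[OF az])
    thus ?thesis by (simp add: face_sum_def sum_negf)
  qed
  hence link_closed: "face_sum X (link p z) = (\<lambda>_. 0)" using cycle by (simp add: fun_eq_iff)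
  have "simplex_supported X adj (link p z)"
    unfolding simplex_supported_def
  proof (intro allI impI)
    fix ys assume "z (p # ys) \<noteq> 0"
    hence "simplex_list X adj (p # ys)" using sz by (simp add: simplex_supported_def)
    thus "simplex_list X adj ys" by (rule simplex_list_Cons)
  qed
  hence "face_sum X (push_chain X adj k (link p z)) ys = push_chain X adj k (face_sum X (link p z)) ys"
    using face_sum_push_chain[OF fin _ _ alternating_Cons[OF az]] kX kc by blast
  thus ?thesis unfolding link_closed by (simp add: push_chain_def)
qed

lemma face_sum_double_cone:
  "face_sum X (cone X adj (k p) (cone X adj (k' p) (push_chain X adj k (link p z)))) ys
    = cone X adj (k' p) (push_chain X adj k (link p z)) ys - cone X adj (k p) (push_chain X adj k (link p z)) ys"
proof -
  let ?e = "push_chain X adj k (link p z)"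
  have ae: "alternating ?e" by (rule alternating_push_chain[OF alternating_Cons[OF az]])
  have "face_sum X (cone X adj (k' p) ?e) = ?e"
  proof
    fix u show "face_sum X (cone X adj (k' p) ?e) u = ?e u"
      using face_sum_cone[OF fin ae cone_admissible_link] face_sum_push_chain_link by (simp add: cone_def)
  qed
  thus ?thesis
    using face_sum_cone[OF fin alternating_cone[OF ae] cone_admissible_double_cone, of ys] by simp
qed

lemma push_chain_point_change:
  "push_chain X adj k' z ys - push_chain X adj k z ys
    = cone X adj (k' p) (push_chain X adj k (link p z)) ys - cone X adj (k p) (push_chain X adj k (link p z)) ys"
proof -
  have "{xs \<in> fibre_lists X k' ys. p \<notin> set xs} = {xs \<in> fibre_lists X k ys. p \<notin> set xs}"
    by (rule fibre_lists_avoiding_cong) (fact agree)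
  moreover have "push_chain X adj k' (link p z) = push_chain X adj k (link p z)"
    by (rule push_chain_link_cong[OF fin sz]) (fact agree)
  ultimately show ?thesis
    using push_chain_split[OF fin pX az, where adj = adj and k = k' and ys = ys]
      push_chain_split[OF fin pX az, where adj = adj and k = k and ys = ys]
    by simp
qed

lemma double_cone_nonzero:
  assumes "cone X adj (k p) (cone X adj (k' p) (push_chain X adj k (link p z))) u \<noteq> 0"
  shows "simplex_list X adj u" "\<exists>xs. z (p # xs) \<noteq> 0 \<and> length u = Suc (Suc (length xs))"
proof -
  let ?u' = "remove1 (k p) u"
  show "simplex_list X adj u" using assms by (auto simp: cone_def split: if_splits)
  have au: "k p \<in> set u" and c1: "cone X adj (k' p) (push_chain X adj k (link p z)) ?u' \<noteq> 0"
    using assms by (auto simp: cone_def split: if_splits)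
  have bu: "k' p \<in> set ?u'" and "push_chain X adj k (link p z) (remove1 (k' p) ?u') \<noteq> 0"
    using c1 by (auto simp: cone_def split: if_splits)
  then obtain xs where "map k xs = remove1 (k' p) ?u'" "z (p # xs) \<noteq> 0"
    using push_chain_link_nonzero(2) by blast
  moreover have "length u = Suc (Suc (length (remove1 (k' p) ?u')))"
  proof -
    have "length ?u' = length u - 1" "length (remove1 (k' p) ?u') = length ?u' - 1"
      using au bu by (simp_all add: length_remove1)
    moreover have "length u > 0" "length ?u' > 0" using au bu by (auto simp: length_pos_if_in_set)
    ultimately show ?thesis by linarith
  qed
  ultimately show "\<exists>xs. z (p # xs) \<noteq> 0 \<and> length u = Suc (Suc (length xs))"
    by (metis length_map)
qed


lemma double_cone_chains:
  assumes z: "z \<in> chains X adj q"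
  shows "cone X adj (k p) (cone X adj (k' p) (push_chain X adj k (link p z))) \<in> chains X adj (Suc q)"
  unfolding chains_iff
proof
  show "alternating (cone X adj (k p) (cone X adj (k' p) (push_chain X adj k (link p z))))"
    by (intro alternating_cone alternating_push_chain alternating_Cons az)
  show "\<forall>u. cone X adj (k p) (cone X adj (k' p) (push_chain X adj k (link p z))) u \<noteq> 0
      \<longrightarrow> ordered_simplex X adj u \<and> length u = Suc (Suc q)"
  proof (intro allI impI)
    fix u assume nz: "cone X adj (k p) (cone X adj (k' p) (push_chain X adj k (link p z))) u \<noteq> 0"
    obtain xs where xs: "z (p # xs) \<noteq> 0" "length u = Suc (Suc (length xs))"
      using double_cone_nonzero(2)[OF nz] by blast
    have "length (p # xs) = Suc q" using chainsD(4)[OF z xs(1)] by blast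
    with xs(2) double_cone_nonzero(1)[OF nz] show "ordered_simplex X adj u \<and> length u = Suc (Suc q)"
      by (auto simp: ordered_simplex_iff_simplex_list)
  qed
qed

lemma boundary_double_cone:
  assumes "z [] = 0"
  shows "boundary X adj (cone X adj (k p) (cone X adj (k' p) (push_chain X adj k (link p z))))
    = (\<lambda>ys. chain_map X adj k' z ys - chain_map X adj k z ys)"
proof
  fix ys
  let ?w = "cone X adj (k p) (cone X adj (k' p) (push_chain X adj k (link p z)))"
  have "boundary X adj ?w ys = (if ys = [] then 0 else face_sum X ?w ys)"
    using boundary_eq_face_sum[OF simplex_supported_cone[of X adj "k p"]] by simp
  also have "\<dots> = push_chain X adj k' z ys - push_chain X adj k z ys"
    unfolding face_sum_double_cone push_chain_point_change by (simp add: cone_def)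
  also have "\<dots> = chain_map X adj k' z ys - chain_map X adj k z ys"
    using chain_map_eq_push_chain[of z] assms by simp
  finally show "boundary X adj ?w ys = chain_map X adj k' z ys - chain_map X adj k z ys" .
qed
end

lemma chain_maps_homologous_point_change:
  assumes fin: "finite X" and pX: "p \<in> X"
    and kX: "\<And>x. x \<in> X \<Longrightarrow> k x \<in> X" and k'X: "\<And>x. x \<in> X \<Longrightarrow> k' x \<in> X"
    and kc: "\<And>x y. x \<in> X \<Longrightarrow> y \<in> X \<Longrightarrow> adj x y \<Longrightarrow> adj_eq adj (k x) (k y)"
    and agree: "\<And>x. x \<in> X \<Longrightarrow> x \<noteq> p \<Longrightarrow> k' x = k x"
    and moved: "adj_eq adj (k p) (k' p)" "adj_eq adj (k' p) (k p)"
    and star: "\<And>x. x \<in> X \<Longrightarrow> adj p x \<Longrightarrow> adj_eq adj (k' p) (k x) \<and> adj_eq adj (k x) (k' p)"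
    and zc: "z \<in> cycles X adj q"
  shows "(\<lambda>ys. chain_map X adj k' z ys - chain_map X adj k z ys) \<in> boundaries X adj q"
proof -
  have zch: "z \<in> chains X adj q" and bz: "boundary X adj z = (\<lambda>_. 0)" using zc by (auto simp: cycles_def)
  note z = chainsD[OF zch]
  have "face_sum X z (p # ys) = 0" for ys
    using fun_cong[OF boundary_eq_face_sum[OF z(1)], of "p # ys"] bz by simp
  then interpret point_change X adj k k' p z
    using assms z(1,3) by unfold_locales
  show ?thesis
    unfolding boundaries_def
    by (rule image_eqI[where f = "boundary X adj", OF boundary_double_cone[OF z(2), symmetric]
          double_cone_chains[OF zch]])
qed

lemma chain_map_cong:
  assumes "\<And>x. x \<in> X \<Longrightarrow> k x = k' x"
  shows "chain_map X adj k = chain_map X adj k'"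
proof -
  have "map k xs = map k' xs" if "set xs \<subseteq> X" for xs using assms that by (intro map_cong) auto
  hence "{xs. set xs \<subseteq> X \<and> map k xs = ys} = {xs. set xs \<subseteq> X \<and> map k' xs = ys}" for ys
    by (intro Collect_cong) auto
  thus ?thesis unfolding chain_map_def by (intro ext) simp
qed

definition chain_maps_homologous ::
  "'a set \<Rightarrow> ('a \<Rightarrow> 'a \<Rightarrow> bool) \<Rightarrow> nat \<Rightarrow> ('a \<Rightarrow> 'a) \<Rightarrow> ('a \<Rightarrow> 'a) \<Rightarrow> bool" where
  "chain_maps_homologous X adj q k k' \<longleftrightarrow>
     (\<forall>z\<in>cycles X adj q. (\<lambda>ys. chain_map X adj k z ys - chain_map X adj k' z ys) \<in> boundaries X adj q)"

lemma chain_maps_homologous_refl: "chain_maps_homologous X adj q k k"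
  unfolding chain_maps_homologous_def using fun_subspace_zero[OF fun_subspace_boundaries, of X adj q]
  by simp

lemma chain_maps_homologous_trans:
  assumes "chain_maps_homologous X adj q k1 k2" "chain_maps_homologous X adj q k2 k3"
  shows "chain_maps_homologous X adj q k1 k3"
  unfolding chain_maps_homologous_def
proof
  fix z assume "z \<in> cycles X adj q"
  hence "(\<lambda>ys. (\<lambda>ys. chain_map X adj k1 z ys - chain_map X adj k2 z ys) ys
      + (\<lambda>ys. chain_map X adj k2 z ys - chain_map X adj k3 z ys) ys) \<in> boundaries X adj q"
    using assms unfolding chain_maps_homologous_def by (intro fun_subspace_add[OF fun_subspace_boundaries]) auto
  thus "(\<lambda>ys. chain_map X adj k1 z ys - chain_map X adj k3 z ys) \<in> boundaries X adj q" by simp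
qed

lemma chain_maps_homologous_cong:
  assumes "chain_maps_homologous X adj q k1' k2'"
    and "\<And>x. x \<in> X \<Longrightarrow> k1 x = k1' x" "\<And>x. x \<in> X \<Longrightarrow> k2 x = k2' x"
  shows "chain_maps_homologous X adj q k1 k2"
  using assms(1) chain_map_cong[OF assms(2)] chain_map_cong[OF assms(3)]
  by (simp add: chain_maps_homologous_def)

definition strong_homotopy :: "'a set \<Rightarrow> ('a \<Rightarrow> 'a \<Rightarrow> bool) \<Rightarrow> nat \<Rightarrow> ('a \<Rightarrow> nat \<Rightarrow> 'a) \<Rightarrow> bool" where
  "strong_homotopy X adj m H \<longleftrightarrow> (\<forall>x\<in>X. \<forall>t\<le>m. H x t \<in> X) \<and>
     (\<forall>x\<in>X. \<forall>x'\<in>X. \<forall>t\<le>m. \<forall>t'\<le>m.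
        (x, t) \<noteq> (x', t') \<and> adj_eq adj x x' \<and> t \<le> t' + 1 \<and> t' \<le> t + 1
        \<longrightarrow> adj_eq adj (H x t) (H x' t'))"

lemma strongly_homotopic_iff:
  "strongly_homotopic X adj f g \<longleftrightarrow>
    (\<exists>m H. m \<ge> 1 \<and> strong_homotopy X adj m H \<and> (\<forall>x\<in>X. H x 0 = f x) \<and> (\<forall>x\<in>X. H x m = g x))"
  unfolding strongly_homotopic_def strong_homotopy_def by blast

lemma strong_homotopyD:
  assumes "strong_homotopy X adj m H"
  shows "\<And>x s. x \<in> X \<Longrightarrow> s \<le> m \<Longrightarrow> H x s \<in> X"
    and "\<And>x x' s s'. x \<in> X \<Longrightarrow> x' \<in> X \<Longrightarrow> s \<le> m \<Longrightarrow> s' \<le> m \<Longrightarrow> (x, s) \<noteq> (x', s')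
      \<Longrightarrow> adj_eq adj x x' \<Longrightarrow> s \<le> s' + 1 \<Longrightarrow> s' \<le> s + 1 \<Longrightarrow> adj_eq adj (H x s) (H x' s')"
  using assms unfolding strong_homotopy_def by blast+

text \<open>One time step of a strong homotopy is performed one point at a time: \<open>K S\<close> has already moved
the points of \<open>S\<close> from time \<open>t\<close> to time \<open>t + 1\<close>, and moving one more point \<open>p\<close> is a point change.\<close>

lemma chain_maps_homologous_homotopy_move_point:
  assumes fin: "finite X" and di: "digital_image X adj" and H: "strong_homotopy X adj m H"
    and t: "t < m" and pX: "p \<in> X" and pS: "p \<notin> S"
  shows "chain_maps_homologous X adj q (\<lambda>x. H x (if x \<in> insert p S then Suc t else t))
    (\<lambda>x. H x (if x \<in> S then Suc t else t))"
proof -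
  define K where "K S' x = H x (if x \<in> S' then Suc t else t)" for S' x
  note HX = strong_homotopyD(1)[OF H] and Hc = strong_homotopyD(2)[OF H]
  have irr: "\<not> adj x x" and sym: "adj x y \<Longrightarrow> adj y x" for x y
    using di by (auto simp: digital_image_def)
  have KX: "K S' x \<in> X" if "x \<in> X" for S' x unfolding K_def by (rule HX[OF that]) (use t in auto)
  have Kc: "adj_eq adj (K S' x) (K S'' y)" if "x \<in> X" "y \<in> X" "x \<noteq> y" "adj_eq adj x y" for S' S'' x y
    unfolding K_def by (rule Hc) (use that t in auto)
  have kp: "K S p = H p t" "K (insert p S) p = H p (Suc t)" using pS by (auto simp: K_def)
  have "chain_maps_homologous X adj q (K (insert p S)) (K S)"
    unfolding chain_maps_homologous_def
  proof
    fix z assume z: "z \<in> cycles X adj q"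
    show "(\<lambda>ys. chain_map X adj (K (insert p S)) z ys - chain_map X adj (K S) z ys) \<in> boundaries X adj q"
    proof (rule chain_maps_homologous_point_change[OF fin pX KX KX _ _ _ _ _ z])
      show "adj_eq adj (K S x) (K S y)" if "x \<in> X" "y \<in> X" "adj x y" for x y
      proof -
        have "x \<noteq> y" using that(3) irr by blast
        thus ?thesis using Kc[OF that(1,2)] that(3) by (simp add: adj_eq_def)
      qed
      show "K (insert p S) x = K S x" if "x \<noteq> p" for x using that by (simp add: K_def)
      show "adj_eq adj (K S p) (K (insert p S) p)"
        unfolding kp by (rule Hc) (use pX t in \<open>auto simp: adj_eq_def\<close>)
      show "adj_eq adj (K (insert p S) p) (K S p)"
        unfolding kp by (rule Hc) (use pX t in \<open>auto simp: adj_eq_def\<close>)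
      show "adj_eq adj (K (insert p S) p) (K S x) \<and> adj_eq adj (K S x) (K (insert p S) p)"
        if x: "x \<in> X" "adj p x" for x
      proof
        have xp: "x \<noteq> p" using x(2) irr by blast
        show "adj_eq adj (K (insert p S) p) (K S x)"
          unfolding kp K_def by (rule Hc) (use pX x xp t in \<open>auto simp: adj_eq_def\<close>)
        show "adj_eq adj (K S x) (K (insert p S) p)"
          unfolding kp K_def by (rule Hc) (use pX x xp t sym in \<open>auto simp: adj_eq_def\<close>)
      qed
    qed
  qed
  thus ?thesis by (simp add: K_def[abs_def])
qed

lemma chain_maps_homologous_homotopy_step:
  assumes fin: "finite X" and di: "digital_image X adj" and H: "strong_homotopy X adj m H"
    and t: "t < m"
  shows "chain_maps_homologous X adj q (\<lambda>x. H x (Suc t)) (\<lambda>x. H x t)"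
proof -
  define K where "K S x = H x (if x \<in> S then Suc t else t)" for S x
  have "chain_maps_homologous X adj q (K S) (K {})" if "finite S" "S \<subseteq> X" for S
    using that
  proof (induction S rule: finite_induct)
    case empty show ?case by (rule chain_maps_homologous_refl)
  next
    case (insert p S)
    have "chain_maps_homologous X adj q (K (insert p S)) (K S)"
      unfolding K_def using chain_maps_homologous_homotopy_move_point[OF fin di H t] insert by simp
    moreover have "chain_maps_homologous X adj q (K S) (K {})" using insert.IH insert.prems by simp
    ultimately show ?case by (rule chain_maps_homologous_trans)
  qed
  from this[OF fin order.refl] show ?thesis
    by (rule chain_maps_homologous_cong) (simp_all add: K_def)
qed

lemma strongly_homotopic_chain_maps_homologous:
  assumes fin: "finite X" and di: "digital_image X adj" and hom: "strongly_homotopic X adj g f"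
  shows "chain_maps_homologous X adj q f g"
proof -
  obtain m H where H: "strong_homotopy X adj m H" and H0: "\<forall>x\<in>X. H x 0 = g x" and Hm: "\<forall>x\<in>X. H x m = f x"
    using hom unfolding strongly_homotopic_iff by blast
  have "chain_maps_homologous X adj q (\<lambda>x. H x t) (\<lambda>x. H x 0)" if "t \<le> m" for t
    using that
  proof (induction t)
    case 0 show ?case by (rule chain_maps_homologous_refl)
  next
    case (Suc t)
    have "chain_maps_homologous X adj q (\<lambda>x. H x (Suc t)) (\<lambda>x. H x t)"
      using chain_maps_homologous_homotopy_step[OF fin di H] Suc.prems by simp
    moreover have "chain_maps_homologous X adj q (\<lambda>x. H x t) (\<lambda>x. H x 0)"
      using Suc.IH Suc.prems by simp
    ultimately show ?case by (rule chain_maps_homologous_trans)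
  qed
  from this[OF order.refl] show ?thesis by (rule chain_maps_homologous_cong) (simp_all add: H0 Hm)
qed

section \<open>The Hopf trace formula\<close>

lemma elementary_chain_chains:
  assumes os: "ordered_simplex X adj u" and l: "length u = Suc q"
  shows "elementary_chain u \<in> chains X adj q"
proof -
  have du: "distinct u" using os by (simp add: ordered_simplex_def)
  have "ordered_simplex X adj w \<and> length w = Suc q" if "elementary_chain u w \<noteq> 0" for w
  proof -
    have "length w = length u" "set w = set u" "distinct w" using elementary_chain_nonzero[OF that du] by auto
    thus ?thesis using os l unfolding ordered_simplex_def by auto
  qed
  thus ?thesis unfolding chains_iff using alternating_elementary_chain[OF du] by blast
qed

lemma elementary_chain_other: "distinct u \<Longrightarrow> set w \<noteq> set u \<Longrightarrow> elementary_chain u w = 0"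
  using elementary_chain_nonzero(2) by blast

context
  fixes X :: "'a set" and adj :: "'a \<Rightarrow> 'a \<Rightarrow> bool" and q :: nat and us :: "'a list list"
  assumes us: "\<And>u. u \<in> set us \<Longrightarrow> ordered_simplex X adj u \<and> length u = Suc q"
    and dist: "distinct (map set us)"
    and cover: "\<And>xs. ordered_simplex X adj xs \<Longrightarrow> length xs = Suc q \<Longrightarrow> set xs \<in> set (map set us)"
begin

lemma distinct_nth_simplex_rep: "i < length us \<Longrightarrow> distinct (us ! i)"
  using us[OF nth_mem] by (simp add: ordered_simplex_def)

lemma elementary_chain_nth:
  assumes "i < length us" "j < length us"
  shows "elementary_chain (us ! i) (us ! j) = (if i = j then 1 else 0)"
proof (cases "i = j")
  case True thus ?thesis using elementary_chain_self[OF distinct_nth_simplex_rep] assms by simp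
next
  case False
  hence "set (us ! j) \<noteq> set (us ! i)" using dist assms by (simp add: distinct_conv_nth)
  thus ?thesis using elementary_chain_other[OF distinct_nth_simplex_rep[OF assms(1)]] False by simp
qed

lemma chains_eq_elementary_sum:
  assumes c: "c \<in> chains X adj q"
  shows "c xs = (\<Sum>i<length us. c (us ! i) * elementary_chain (us ! i) xs)"
proof (cases "ordered_simplex X adj xs \<and> length xs = Suc q")
  case True
  hence "set xs \<in> set (map set us)" using cover by blast
  then obtain i where i: "i < length us" "set (us ! i) = set xs"
    by (auto simp: in_set_conv_nth)
  have "mset xs = mset (us ! i)"
    using True i distinct_nth_simplex_rep[OF i(1)] us[OF nth_mem[OF i(1)]]
    by (simp add: ordered_simplex_def set_eq_iff_mset_eq_distinct)
  then obtain p where p: "p permutes {..<length (us ! i)}" "permute_list p (us ! i) = xs"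
    by (rule mset_eq_permutation)
  have "(\<Sum>j<length us. c (us ! j) * elementary_chain (us ! j) xs)
      = (\<Sum>j<length us. if j = i then c (us ! i) * of_int (sign p) else 0)"
  proof (rule sum.cong[OF refl])
    fix j assume j: "j \<in> {..<length us}"
    show "c (us ! j) * elementary_chain (us ! j) xs = (if j = i then c (us ! i) * of_int (sign p) else 0)"
    proof (cases "j = i")
      case True
      thus ?thesis using elementary_chain_permute[OF distinct_nth_simplex_rep[OF i(1)] p(1)] p(2) by simp
    next
      case False
      hence "map set us ! j \<noteq> map set us ! i" using nth_eq_iff_index_eq[OF dist, of j i] i(1) j by simp
      hence "set (us ! j) \<noteq> set xs" using i j by simp
      thus ?thesis using elementary_chain_other[OF distinct_nth_simplex_rep] j False by simp
    qed
  qed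
  also have "\<dots> = c xs" using i(1) alternatingD[OF chainsD(3)[OF c] p(1)] p(2) by simp
  finally show ?thesis by simp
next
  case False
  have "elementary_chain (us ! j) xs = 0" if "j < length us" for j
  proof -
    have "elementary_chain (us ! j) \<in> chains X adj q"
      using us[OF nth_mem[OF that]] by (intro elementary_chain_chains) auto
    thus ?thesis using chainsD(4) False by blast
  qed
  thus ?thesis using chainsD(4)[OF c, of xs] False by auto
qed

lemma lincomb_elementary_chains:
  assumes c: "c \<in> chains X adj q"
  shows "lincomb (map c us) (map elementary_chain us) = c"
proof
  fix xs
  show "lincomb (map c us) (map elementary_chain us) xs = c xs"
    unfolding lincomb_def chains_eq_elementary_sum[OF c, of xs] by (intro sum.cong) auto
qed

lemma quot_basis_chains_elementary:
  "quot_basis (chains X adj q) zero_space (map elementary_chain us)"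
proof (rule quot_basisI[OF fun_subspace_zero_space])
  show "set (map elementary_chain us) \<subseteq> chains X adj q"
  proof
    fix c assume "c \<in> set (map elementary_chain us)"
    then obtain u where "u \<in> set us" "c = elementary_chain u" by auto
    thus "c \<in> chains X adj q" using us elementary_chain_chains by blast
  qed
  show "indep_mod zero_space (map elementary_chain us)"
    unfolding indep_mod_def
  proof (intro allI impI)
    fix a i assume a: "length a = length (map elementary_chain us)"
      "lincomb a (map elementary_chain us) \<in> zero_space" "i < length (map elementary_chain us)"
    have "0 = lincomb a (map elementary_chain us) (us ! i)" using a(2) by (simp add: zero_space_def)
    also have "\<dots> = (\<Sum>j<length us. a ! j * elementary_chain (us ! j) (us ! i))"
      unfolding lincomb_def by simp
    also have "\<dots> = (\<Sum>j<length us. if j = i then a ! i else 0)"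
      using a(3) by (intro sum.cong) (simp_all add: elementary_chain_nth)
    finally show "a ! i = 0" using a(3) by simp
  qed
  show "spans_mod (chains X adj q) zero_space (map elementary_chain us)"
    unfolding spans_mod_def
  proof
    fix c assume "c \<in> chains X adj q"
    thus "\<exists>a. length a = length (map elementary_chain us) \<and> cong_mod zero_space c (lincomb a (map elementary_chain us))"
      using lincomb_elementary_chains by (intro exI[of _ "map c us"]) (simp add: cong_mod_zero_space)
  qed
qed

lemma quot_trace_chains_elementary:
  assumes fin: "finite X" and g: "dcontinuous X adj g"
  shows "quot_trace (chains X adj q) zero_space (chain_map X adj g)
    = (\<Sum>i<length us. chain_map X adj g (elementary_chain (us ! i)) (us ! i))"
proof -
  let ?cs = "map elementary_chain us"
  note T = chain_map_invariant[OF fin g]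
  have coord: "quot_coord zero_space ?cs v = map v us" if "v \<in> chains X adj q" for v
    using lincomb_elementary_chains[OF that]
    by (intro quot_coord_unique[OF quot_basis_chains_elementary that]) (simp_all add: cong_mod_zero_space)
  have "quot_trace (chains X adj q) zero_space (chain_map X adj g)
      = basis_trace zero_space ?cs (chain_map X adj g)"
    by (rule quot_trace_eq_basis_trace[OF fun_subspace_zero_space fun_linear_chain_map T(1) T(4)
          quot_basis_chains_elementary])
  also have "\<dots> = (\<Sum>i<length us. chain_map X adj g (elementary_chain (us ! i)) (us ! i))"
    unfolding basis_trace_def length_map
  proof (intro sum.cong refl)
    fix i assume "i \<in> {..<length us}"
    hence i: "i < length us" by simp
    hence "elementary_chain (us ! i) \<in> chains X adj q"
      using us[OF nth_mem[OF i]] by (intro elementary_chain_chains) auto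
    hence "chain_map X adj g (elementary_chain (us ! i)) \<in> chains X adj q" using T(1) by blast
    thus "quot_coord zero_space ?cs (chain_map X adj g (?cs ! i)) ! i
        = chain_map X adj g (elementary_chain (us ! i)) (us ! i)"
      using coord i by simp
  qed
  finally show ?thesis .
qed

end

lemma simplex_representatives_exist:
  assumes fin: "finite X"
  obtains us where "\<And>u. u \<in> set us \<Longrightarrow> ordered_simplex X adj u \<and> length u = Suc q"
    "distinct (map set us)"
    "\<And>xs. ordered_simplex X adj xs \<Longrightarrow> length xs = Suc q \<Longrightarrow> set xs \<in> set (map set us)"
proof -
  define SS where "SS = {set xs | xs. ordered_simplex X adj xs \<and> length xs = Suc q}"
  define rep where "rep s = (SOME xs. ordered_simplex X adj xs \<and> length xs = Suc q \<and> set xs = s)" for s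
  have rep: "ordered_simplex X adj (rep s) \<and> length (rep s) = Suc q \<and> set (rep s) = s" if "s \<in> SS" for s
    unfolding rep_def by (rule someI_ex) (use that in \<open>auto simp: SS_def\<close>)
  have "finite SS" by (rule finite_subset[of _ "Pow X"]) (use fin in \<open>auto simp: SS_def ordered_simplex_def\<close>)
  then obtain l where l: "set l = SS" "distinct l" using finite_distinct_list by blast
  have "map (set \<circ> rep) l = map id l" using rep l(1) by (intro map_cong) auto
  hence "map set (map rep l) = l" by simp
  show ?thesis
  proof (rule that[of "map rep l"])
    show "\<And>u. u \<in> set (map rep l) \<Longrightarrow> ordered_simplex X adj u \<and> length u = Suc q"
      using rep l(1) by auto
    show "distinct (map set (map rep l))" using \<open>map set (map rep l) = l\<close> l(2) by simp
    show "set xs \<in> set (map set (map rep l))" if "ordered_simplex X adj xs" "length xs = Suc q" for xs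
      using that l(1) \<open>map set (map rep l) = l\<close> unfolding SS_def by auto
  qed
qed

lemma chain_map_elementary_chain_diagonal:
  assumes no_afp: "\<And>x. x \<in> X \<Longrightarrow> \<not> adj_eq adj (g x) x" and u: "ordered_simplex X adj u"
  shows "chain_map X adj g (elementary_chain u) u = 0"
proof -
  have du: "distinct u" using u by (simp add: ordered_simplex_def)
  have "elementary_chain u xs = 0" if xs: "set xs \<subseteq> X" "map g xs = u" for xs
  proof (rule ccontr)
    assume "elementary_chain u xs \<noteq> 0"
    hence sx: "set xs = set u" using elementary_chain_nonzero(2)[OF _ du] by blast
    have "u \<noteq> []" using u by (simp add: ordered_simplex_def)
    then obtain x where x: "x \<in> set xs" using xs(2) by (cases xs) auto
    have gx: "g x \<in> set u" using x xs(2) by auto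
    have xu: "x \<in> set u" using x sx by simp
    have "adj_eq adj (g x) x" using u gx xu unfolding ordered_simplex_def adj_eq_def by blast
    moreover have "x \<in> X" using x xs(1) by auto
    ultimately show False using no_afp by blast
  qed
  thus ?thesis unfolding chain_map_def by simp
qed

lemma chain_trace_zero:
  assumes fin: "finite X" and g: "dcontinuous X adj g"
    and no_afp: "\<And>x. x \<in> X \<Longrightarrow> \<not> adj_eq adj (g x) x"
  shows "quot_trace (chains X adj q) zero_space (chain_map X adj g) = 0"
proof -
  obtain us where us: "\<And>u. u \<in> set us \<Longrightarrow> ordered_simplex X adj u \<and> length u = Suc q"
    "distinct (map set us)" "\<And>xs. ordered_simplex X adj xs \<Longrightarrow> length xs = Suc q \<Longrightarrow> set xs \<in> set (map set us)"
    using simplex_representatives_exist[where adj = adj and q = q, OF fin] by blast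
  have "quot_trace (chains X adj q) zero_space (chain_map X adj g)
      = (\<Sum>i<length us. chain_map X adj g (elementary_chain (us ! i)) (us ! i))"
    by (rule quot_trace_chains_elementary) (use us fin g in blast)+
  also have "\<dots> = 0"
  proof (rule sum.neutral, rule ballI)
    fix i assume "i \<in> {..<length us}"
    hence "ordered_simplex X adj (us ! i)" using us(1) by simp
    thus "chain_map X adj g (elementary_chain (us ! i)) (us ! i) = 0"
      by (rule chain_map_elementary_chain_diagonal[rotated]) (use no_afp in blast)
  qed
  finally show ?thesis .
qed

lemma chains_top_eq_0:
  assumes fin: "finite X" and c: "c \<in> chains X adj q" and q: "card X \<le> q"
  shows "c = (\<lambda>_. 0)"
proof
  fix xs show "c xs = 0"
  proof (rule ccontr)
    assume "c xs \<noteq> 0"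
    hence os: "ordered_simplex X adj xs" and l: "length xs = Suc q" using chainsD(4)[OF c] by auto
    have "card (set xs) = length xs" using os by (simp add: ordered_simplex_def distinct_card)
    moreover have "card (set xs) \<le> card X" using os fin by (intro card_mono) (auto simp: ordered_simplex_def)
    ultimately show False using l q by simp
  qed
qed

context
  fixes X :: "'a set" and adj :: "'a \<Rightarrow> 'a \<Rightarrow> bool" and g :: "'a \<Rightarrow> 'a"
  assumes fin: "finite X" and g: "dcontinuous X adj g"
begin

lemma quot_trace_chains_split:
  "quot_trace (chains X adj q) zero_space (chain_map X adj g)
    = quot_trace (chains X adj q) (cycles X adj q) (chain_map X adj g)
      + quot_trace (cycles X adj q) (boundaries X adj q) (chain_map X adj g)
      + quot_trace (boundaries X adj q) zero_space (chain_map X adj g)"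
proof -
  note T = chain_map_invariant[OF fin g] and lT = fun_linear_chain_map
  note fin_lists = finite_lists_Suc[OF fin]
  have suppZ: "v y \<noteq> 0 \<Longrightarrow> y \<in> {xs. set xs \<subseteq> X \<and> length xs = Suc q}" if "v \<in> cycles X adj q" for v y
    using chains_support cycles_subset_chains that by blast
  have "quot_trace (chains X adj q) zero_space (chain_map X adj g)
      = quot_trace (chains X adj q) (cycles X adj q) (chain_map X adj g)
        + quot_trace (cycles X adj q) zero_space (chain_map X adj g)"
    using zero_space_subset_boundaries boundaries_subset_cycles[OF fin]
    by (intro quot_trace_add[OF fun_subspace_zero_space fun_subspace_cycles fun_subspace_chains _
          cycles_subset_chains fin_lists chains_support lT T(1,2,4)]) blast
  also have "quot_trace (cycles X adj q) zero_space (chain_map X adj g)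
      = quot_trace (cycles X adj q) (boundaries X adj q) (chain_map X adj g)
        + quot_trace (boundaries X adj q) zero_space (chain_map X adj g)"
    by (rule quot_trace_add[OF fun_subspace_zero_space fun_subspace_boundaries fun_subspace_cycles
          zero_space_subset_boundaries boundaries_subset_cycles[OF fin] fin_lists suppZ lT T(2,3,4)])
  finally show ?thesis by simp
qed

text \<open>The boundary map identifies \<open>C\<^sub>q\<^sub>+\<^sub>1 / Z\<^sub>q\<^sub>+\<^sub>1\<close> with \<open>B\<^sub>q\<close>.\<close>

lemma quot_trace_chains_mod_cycles_Suc:
  "quot_trace (chains X adj (Suc q)) (cycles X adj (Suc q)) (chain_map X adj g)
    = quot_trace (boundaries X adj q) zero_space (chain_map X adj g)"
proof -
  note T = chain_map_invariant[OF fin g] and lT = fun_linear_chain_map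
  have gX: "\<And>x. x \<in> X \<Longrightarrow> g x \<in> X"
    and gc: "\<And>x y. x \<in> X \<Longrightarrow> y \<in> X \<Longrightarrow> adj x y \<Longrightarrow> adj_eq adj (g x) (g y)"
    using g by (auto simp: dcontinuous_def)
  have "\<exists>ds. quot_basis (chains X adj (Suc q)) (cycles X adj (Suc q)) ds"
    by (rule quot_basis_exists[OF fun_subspace_cycles fun_subspace_chains cycles_subset_chains
          finite_lists_Suc[OF fin]]) (rule chains_support)
  then obtain ds where ds: "quot_basis (chains X adj (Suc q)) (cycles X adj (Suc q)) ds" ..
  hence ds': "quot_basis (chains X adj (Suc q)) {c \<in> chains X adj (Suc q). boundary X adj c = (\<lambda>_. 0)} ds"
    by (simp add: cycles_def)
  have comm: "chain_map X adj g (boundary X adj c) = boundary X adj (chain_map X adj g c)"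
    if "c \<in> chains X adj (Suc q)" for c
    using chain_map_boundary[OF fin gX gc that] .
  have "quot_trace (chains X adj (Suc q)) (cycles X adj (Suc q)) (chain_map X adj g)
      = basis_trace (cycles X adj (Suc q)) ds (chain_map X adj g)"
    by (rule quot_trace_eq_basis_trace[OF fun_subspace_cycles lT T(1,2) ds])
  also have "\<dots> = basis_trace zero_space (map (boundary X adj) ds) (chain_map X adj g)"
    using basis_trace_image[OF fun_subspace_chains fun_linear_boundary ds' T(1) comm]
    by (simp add: cycles_def)
  also have "\<dots> = quot_trace (boundaries X adj q) zero_space (chain_map X adj g)"
    using quot_basis_image[OF fun_subspace_chains fun_linear_boundary ds']
    by (intro quot_trace_eq_basis_trace[OF fun_subspace_zero_space lT T(3,4), symmetric])
      (simp add: boundaries_def)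
  finally show ?thesis .
qed

lemma quot_trace_chains_mod_cycles_0:
  "quot_trace (chains X adj 0) (cycles X adj 0) (chain_map X adj g) = 0"
proof -
  have "cycles X adj 0 = chains X adj 0" using boundary_chains_0 by (auto simp: cycles_def)
  thus ?thesis using quot_trace_self[OF fun_subspace_chains fun_linear_chain_map chain_map_invariant(1)[OF fin g]]
    by simp
qed

lemma quot_trace_boundaries_top:
  "quot_trace (boundaries X adj (card X)) zero_space (chain_map X adj g) = 0"
proof -
  have "boundaries X adj (card X) = zero_space"
  proof
    show "boundaries X adj (card X) \<subseteq> zero_space"
    proof
      fix b assume "b \<in> boundaries X adj (card X)"
      then obtain c where c: "c \<in> chains X adj (Suc (card X))" "b = boundary X adj c"
        by (auto simp: boundaries_def)
      have "c = (\<lambda>_. 0)" by (rule chains_top_eq_0[OF fin c(1)]) simp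
      thus "b \<in> zero_space" using c(2) fun_linear_zero[OF fun_linear_boundary] by (simp add: zero_space_def)
    qed
  qed (rule zero_space_subset_boundaries)
  thus ?thesis
    using quot_trace_self[OF fun_subspace_zero_space fun_linear_chain_map chain_map_invariant(4)[OF fin g]]
    by simp
qed

text \<open>By additivity along \<open>0 \<subseteq> B\<^sub>q \<subseteq> Z\<^sub>q \<subseteq> C\<^sub>q\<close> the chain trace in degree \<open>q\<close> is \<open>r\<^sub>q + h\<^sub>q + b\<^sub>q\<close>, where
\<open>r\<^sub>q\<^sub>+\<^sub>1 = b\<^sub>q\<close>, so the contributions \<open>r\<close> and \<open>b\<close> telescope away.\<close>

lemma lefschetz_eq_chain_traces:
  "lefschetz X adj g = (\<Sum>q\<le>card X. (-1) ^ q * quot_trace (chains X adj q) zero_space (chain_map X adj g))"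
proof -
  define h where "h q = quot_trace (cycles X adj q) (boundaries X adj q) (chain_map X adj g)" for q
  define b where "b q = quot_trace (boundaries X adj q) zero_space (chain_map X adj g)" for q
  define r where "r q = quot_trace (chains X adj q) (cycles X adj q) (chain_map X adj g)" for q
  have telescope: "(\<Sum>q\<le>n. (-1) ^ q * (r q + b q)) = (-1) ^ n * b n" for n
  proof (induction n)
    case 0 thus ?case using quot_trace_chains_mod_cycles_0 by (simp add: r_def)
  next
    case (Suc n)
    hence "(\<Sum>q\<le>Suc n. (-1) ^ q * (r q + b q)) = (-1) ^ n * b n + (-1) ^ Suc n * (b n + b (Suc n))"
      using quot_trace_chains_mod_cycles_Suc by (simp add: r_def b_def)
    also have "\<dots> = (-1) ^ Suc n * b (Suc n)" by (simp add: algebra_simps)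
    finally show ?case .
  qed
  have "(\<Sum>q\<le>card X. (-1) ^ q * quot_trace (chains X adj q) zero_space (chain_map X adj g))
      = (\<Sum>q\<le>card X. (-1) ^ q * h q) + (\<Sum>q\<le>card X. (-1) ^ q * (r q + b q))"
    unfolding quot_trace_chains_split by (simp add: h_def r_def b_def algebra_simps sum.distrib)
  also have "\<dots> = lefschetz X adj g"
    unfolding telescope using quot_trace_boundaries_top by (simp add: lefschetz_def h_def b_def)
  finally show ?thesis ..
qed

end

lemma lefschetz_eq_0:
  assumes "finite X" "dcontinuous X adj g" "\<And>x. x \<in> X \<Longrightarrow> \<not> approx_fixed_point adj g x"
  shows "lefschetz X adj g = 0"
  using chain_trace_zero[OF assms(1,2)] assms(3)
  by (simp add: lefschetz_eq_chain_traces[OF assms(1,2)] approx_fixed_point_def)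

section \<open>Lefschetz numbers of strongly homotopic maps\<close>

lemma quot_trace_cong_mod:
  assumes "fun_subspace B" "fun_subspace Z" "B \<subseteq> Z" "finite S" "\<And>z y. z \<in> Z \<Longrightarrow> z y \<noteq> 0 \<Longrightarrow> y \<in> S"
    and lin: "fun_linear T" "fun_linear T'" and inv: "T ` Z \<subseteq> Z" "T ` B \<subseteq> B" "T' ` Z \<subseteq> Z" "T' ` B \<subseteq> B"
    and cong: "\<And>z. z \<in> Z \<Longrightarrow> cong_mod B (T z) (T' z)"
  shows "quot_trace Z B T = quot_trace Z B T'"
proof -
  obtain cs where cs: "quot_basis Z B cs" using quot_basis_exists[OF assms(1-4)] assms(5) by blast
  have "quot_coord B cs (T (cs ! i)) = quot_coord B cs (T' (cs ! i))" if "i < length cs" for i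
  proof -
    have z: "cs ! i \<in> Z" using quot_basis_nth_mem[OF cs that] .
    hence "T (cs ! i) \<in> Z" "T' (cs ! i) \<in> Z" using inv by blast+
    note spec = quot_coord_spec[OF cs this(2)]
    have "cong_mod B (T (cs ! i)) (lincomb (quot_coord B cs (T' (cs ! i))) cs)"
      using cong_mod_trans[OF assms(1) cong[OF z] spec(2)] .
    thus ?thesis by (rule quot_coord_unique[OF cs \<open>T (cs ! i) \<in> Z\<close> spec(1)])
  qed
  hence "basis_trace B cs T = basis_trace B cs T'" by (simp add: basis_trace_def)
  thus ?thesis using quot_trace_eq_basis_trace[OF assms(1) lin(1) inv(1,2) cs]
      quot_trace_eq_basis_trace[OF assms(1) lin(2) inv(3,4) cs] by simp
qed

lemma lefschetz_strongly_homotopic: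
  assumes fin: "finite X" and di: "digital_image X adj" and f: "dcontinuous X adj f"
    and g: "dcontinuous X adj g" and hom: "strongly_homotopic X adj g f"
  shows "lefschetz X adj f = lefschetz X adj g"
  unfolding lefschetz_def
proof (rule sum.cong[OF refl])
  fix q
  have homologous: "cong_mod (boundaries X adj q) (chain_map X adj f z) (chain_map X adj g z)"
    if "z \<in> cycles X adj q" for z
    using strongly_homotopic_chain_maps_homologous[OF fin di hom] that
    unfolding chain_maps_homologous_def cong_mod_def by blast
  have "quot_trace (cycles X adj q) (boundaries X adj q) (chain_map X adj f)
      = quot_trace (cycles X adj q) (boundaries X adj q) (chain_map X adj g)"
  proof (rule quot_trace_cong_mod[OF fun_subspace_boundaries fun_subspace_cycles
        boundaries_subset_cycles[OF fin] finite_lists_Suc[OF fin] _ fun_linear_chain_map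
        fun_linear_chain_map _ _ _ _ homologous])
    show "z y \<noteq> 0 \<Longrightarrow> y \<in> {xs. set xs \<subseteq> X \<and> length xs = Suc q}" if "z \<in> cycles X adj q" for z y
      using chains_support cycles_subset_chains that by blast
  qed (use chain_map_invariant(2,3)[OF fin f] chain_map_invariant(2,3)[OF fin g] in simp_all)
  thus "(-1) ^ q * quot_trace (cycles X adj q) (boundaries X adj q) (chain_map X adj f)
      = (-1) ^ q * quot_trace (cycles X adj q) (boundaries X adj q) (chain_map X adj g)" by simp
qed

lemma approx_fixed_point_image:
  assumes "dcontinuous X adj g" "x \<in> X" "approx_fixed_point adj g x"
  shows "approx_fixed_point adj g (g x)"
proof (cases "g x = x")
  case False
  hence "adj (g x) x" using assms(3) by (simp add: approx_fixed_point_def adj_eq_def)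
  thus ?thesis using assms(1,2) unfolding dcontinuous_def approx_fixed_point_def by blast
qed (simp add: approx_fixed_point_def adj_eq_def)

theorem corollary3p5:
  fixes X :: "'a set" and adj :: "'a \<Rightarrow> 'a \<Rightarrow> bool" and f g :: "'a \<Rightarrow> 'a"
  assumes "finite X"
    and "digital_image X adj"
    and "dcontinuous X adj f"
    and "lefschetz X adj f \<noteq> 0"
    and "dcontinuous X adj g"
    and "strongly_homotopic X adj g f"
  shows "(\<exists>x\<in>X. g x = x) \<or>
         (\<exists>x\<in>X. \<exists>y\<in>X. x \<noteq> y \<and> approx_fixed_point adj g x \<and> approx_fixed_point adj g y)"
proof (rule ccontr)
  assume neg: "\<not> ?thesis"
  have "\<not> approx_fixed_point adj g x" if x: "x \<in> X" for x
  proof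
    assume afp: "approx_fixed_point adj g x"
    have "g x \<in> X" using assms(5) x by (simp add: dcontinuous_def)
    moreover have "g x \<noteq> x" using neg x by blast
    ultimately show False using neg x afp approx_fixed_point_image[OF assms(5) x afp] by blast
  qed
  hence "lefschetz X adj g = 0" by (rule lefschetz_eq_0[OF assms(1,5)])
  moreover have "lefschetz X adj f = lefschetz X adj g"
    by (rule lefschetz_strongly_homotopic[OF assms(1,2,3,5,6)])
  ultimately show False using assms(4) by simp
qed

end
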